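(* Let $K\subseteq\mathbb{R}^n$ be a closed convex cone with apex $0$ (so that $K^\sharp=K$) and let $s=(s_\alpha)_{\alpha\in\mathbb{N}_0^n}$ be a real sequence. Then the following are equivalent: (i) $D(s)$ is a $K$-positivity preserver; (ii) $s$ is a $K^\sharp$-moment sequence.
   Context: $D(s):=\sum_\alpha\frac{s_\alpha}{\alpha!}\partial^\alpha$ on $\mathbb{R}[x_1,\dots,x_n]$. $T$ is a $K$-positivity preserver if it maps polynomials non-negative on $K$ to polynomials non-negative on $K$. $K^\sharp:=\{x\in\mathbb{R}^n: x+K\subseteq K\}$. For closed $L$, $s$ is an $L$-moment sequence if $s_\alpha=\int x^\alpha\,\mathrm{d}\mu$ for all $\alpha$ for some measure $\mu$ with $\mathrm{supp}\,\mu\subseteq L$. *)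

theory Defs
  imports "HOL-Analysis.Analysis"
begin

text \<open>Multi-indices are functions 'n => nat, points of R^n are real^'n.
A real polynomial in n variables is represented by its coefficient function
c :: ('n => nat) => real with finite support.\<close>

definition mono_eval :: "('n::finite \<Rightarrow> nat) \<Rightarrow> real^'n \<Rightarrow> real" where
  "mono_eval \<alpha> x = (\<Prod>i\<in>UNIV. (x$i) ^ (\<alpha> i))"

definition mfact :: "('n::finite \<Rightarrow> nat) \<Rightarrow> real" where
  "mfact \<alpha> = (\<Prod>i\<in>UNIV. fact (\<alpha> i))"

definition is_mpoly :: "(('n::finite \<Rightarrow> nat) \<Rightarrow> real) \<Rightarrow> bool" where
  "is_mpoly c \<longleftrightarrow> finite {\<beta>. c \<beta> \<noteq> 0}"

definition poly_fun :: "(('n::finite \<Rightarrow> nat) \<Rightarrow> real) \<Rightarrow> real^'n \<Rightarrow> real" where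
  "poly_fun c x = (\<Sum>\<beta>\<in>{\<beta>. c \<beta> \<noteq> 0}. c \<beta> * mono_eval \<beta> x)"

text \<open>Coefficients of the partial derivative \<partial>^\<alpha> p:
  \<partial>^\<alpha> x^(\<gamma>+\<alpha>) = ((\<gamma>+\<alpha>)!/\<gamma>!) x^\<gamma>.\<close>
definition pdiff :: "('n::finite \<Rightarrow> nat) \<Rightarrow> (('n \<Rightarrow> nat) \<Rightarrow> real) \<Rightarrow> ('n \<Rightarrow> nat) \<Rightarrow> real" where
  "pdiff \<alpha> c = (\<lambda>\<gamma>. c (\<lambda>i. \<gamma> i + \<alpha> i) *
      (\<Prod>i\<in>UNIV. fact (\<gamma> i + \<alpha> i) / fact (\<gamma> i)))"

text \<open>D(s) = sum_\<alpha> s_\<alpha>/\<alpha>! \<partial>^\<alpha>; on a polynomial only the finitely many \<alpha>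
  below some monomial of the support contribute (all other terms vanish).\<close>
definition Dop :: "(('n::finite \<Rightarrow> nat) \<Rightarrow> real) \<Rightarrow> (('n \<Rightarrow> nat) \<Rightarrow> real) \<Rightarrow> ('n \<Rightarrow> nat) \<Rightarrow> real" where
  "Dop s c = (\<lambda>\<gamma>. \<Sum>\<alpha>\<in>{\<alpha>. \<exists>\<beta>. c \<beta> \<noteq> 0 \<and> (\<forall>i. \<alpha> i \<le> \<beta> i)}.
      s \<alpha> / mfact \<alpha> * pdiff \<alpha> c \<gamma>)"

definition K_pos_preserver ::
  "(real^'n::finite) set \<Rightarrow> ((('n \<Rightarrow> nat) \<Rightarrow> real) \<Rightarrow> (('n \<Rightarrow> nat) \<Rightarrow> real)) \<Rightarrow> bool" where
  "K_pos_preserver K T \<longleftrightarrow>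
     (\<forall>c. is_mpoly c \<and> (\<forall>x\<in>K. poly_fun c x \<ge> 0) \<longrightarrow> (\<forall>x\<in>K. poly_fun (T c) x \<ge> 0))"

definition sharp :: "(real^'n::finite) set \<Rightarrow> (real^'n) set" where
  "sharp K = {x. \<forall>y\<in>K. x + y \<in> K}"

text \<open>For closed L, supp \<mu> \<subseteq> L iff the complement of L is \<mu>-null.\<close>
definition moment_seq :: "(real^'n::finite) set \<Rightarrow> (('n \<Rightarrow> nat) \<Rightarrow> real) \<Rightarrow> bool" where
  "moment_seq L s \<longleftrightarrow> (\<exists>M :: (real^'n) measure.
      sets M = sets borel \<and> emeasure M (space M - L) = 0 \<and>
      (\<forall>\<alpha>. integrable M (mono_eval \<alpha>) \<and> s \<alpha> = integral\<^sup>L M (mono_eval \<alpha>)))"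

end

theory Submission
  imports Defs "HOL-Library.Function_Algebras"
begin

text \<open>
  If \<open>s\<close> is the moment sequence of a measure \<open>\<mu>\<close> carried by \<open>sharp K\<close>, Taylor's formula gives
  \<open>(D(s) p)(x) = \<integral> p(x + y) d\<mu>(y)\<close>, which is nonnegative for \<open>x \<in> K\<close> because
  \<open>x + sharp K \<subseteq> K\<close>.

  Conversely, for a closed convex cone \<open>sharp K = K \<ni> 0\<close>, and evaluating \<open>D(s) p\<close> at \<open>0\<close> shows
  that the functional \<open>p \<mapsto> \<Sum> c\<^sub>\<beta> s\<^sub>\<beta>\<close> is nonnegative on polynomials nonnegative on \<open>K\<close>.
  Haviland's theorem then makes \<open>s\<close> a \<open>K\<close>-moment sequence. By M. Riesz's extension theorem the
  functional extends to a positive functional \<open>L\<close> on all functions dominated on \<open>K\<close> by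
  polynomials. To represent \<open>L\<close> by a measure, \<open>\<real>\<^sup>n\<close> is squashed onto the open cube \<open>(0, 1)\<^sup>n\<close>
  and each point is coded by the binary digits of its coordinates, a point of the Cantor space
  \<open>{0, 1}\<^sup>n\<^sup>\<times>\<^sup>\<nat>\<close>. \<open>L\<close> induces a finitely additive set function on cylinders, countably additive
  because cylinders are compact, so Caratheodory's theorem yields a measure \<open>\<rho>\<close>. Integration
  against \<open>\<rho>\<close> agrees with \<open>L\<close> on continuous functions of the closed cube; cutoffs near the
  boundary of the cube, whose error is controlled by the second moments, show that the image of
  \<open>\<rho>\<close> in \<open>\<real>\<^sup>n\<close> is concentrated on \<open>K\<close> and has moments \<open>s\<close>.
\<close>

section \<open>M. Riesz's extension theorem\<close>

text \<open>A functional is handled through its graph, a set of pairs \<open>(f, a)\<close> meaning \<open>f \<mapsto> a\<close>.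
  This avoids proving that it is well defined: positivity alone forces the value to depend
  only on the restriction of \<open>f\<close> to \<open>K\<close>.\<close>

definition positive_linear_graph :: "'a set \<Rightarrow> (('a \<Rightarrow> real) \<times> real) set \<Rightarrow> bool" where
  "positive_linear_graph K G \<longleftrightarrow>
     (\<forall>f a g b. (f, a) \<in> G \<longrightarrow> (g, b) \<in> G \<longrightarrow> ((\<lambda>x. f x + g x), a + b) \<in> G) \<and>
     (\<forall>f a c. (f, a) \<in> G \<longrightarrow> ((\<lambda>x. c * f x), c * a) \<in> G) \<and>
     (\<forall>f a. (f, a) \<in> G \<longrightarrow> (\<forall>x\<in>K. 0 \<le> f x) \<longrightarrow> 0 \<le> a)"

definition sandwich_space :: "'a set \<Rightarrow> (('a \<Rightarrow> real) \<times> real) set \<Rightarrow> ('a \<Rightarrow> real) set" where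
  "sandwich_space K G =
     {e. \<exists>f a g b. (f, a) \<in> G \<and> (g, b) \<in> G \<and> (\<forall>x\<in>K. f x \<le> e x \<and> e x \<le> g x)}"

text \<open>The one-step extension: \<open>e\<close> may be given any value \<open>c\<close> that
  separates the values of the minorants of \<open>e\<close> in \<open>G\<close> from those of its majorants.\<close>

definition graph_extend ::
    "(('a \<Rightarrow> real) \<times> real) set \<Rightarrow> ('a \<Rightarrow> real) \<Rightarrow> real \<Rightarrow> (('a \<Rightarrow> real) \<times> real) set" where
  "graph_extend G e c = {((\<lambda>x. f x + t * e x), a + t * c) | f a t. (f, a) \<in> G}"

lemma sandwich_spaceI:
  "(f, a) \<in> G \<Longrightarrow> (g, b) \<in> G \<Longrightarrow> (\<And>x. x \<in> K \<Longrightarrow> f x \<le> e x \<and> e x \<le> g x) \<Longrightarrow>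
    e \<in> sandwich_space K G"
  unfolding sandwich_space_def by blast

lemma graph_in_sandwich_space:
  assumes "(f, a) \<in> G"
  shows "f \<in> sandwich_space K G"
  by (rule sandwich_spaceI[OF assms assms]) simp

lemma graph_extendI: "(f, a) \<in> G \<Longrightarrow> ((\<lambda>x. f x + t * e x), a + t * c) \<in> graph_extend G e c"
  unfolding graph_extend_def by blast

lemma subset_graph_extend: "G \<subseteq> graph_extend G e c"
proof
  fix p assume "p \<in> G"
  then obtain f a where "p = (f, a)" "(f, a) \<in> G" by (cases p) auto
  then show "p \<in> graph_extend G e c" using graph_extendI[where t = 0] by simp
qed

context
  fixes K :: "'a set" and G :: "(('a \<Rightarrow> real) \<times> real) set"
  assumes G: "positive_linear_graph K G"
begin

lemma positive_linear_graph_add: "(f, a) \<in> G \<Longrightarrow> (g, b) \<in> G \<Longrightarrow> ((\<lambda>x. f x + g x), a + b) \<in> G"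
  using G unfolding positive_linear_graph_def by blast

lemma positive_linear_graph_scale: "(f, a) \<in> G \<Longrightarrow> ((\<lambda>x. c * f x), c * a) \<in> G"
  using G unfolding positive_linear_graph_def by blast

lemma positive_linear_graph_nonneg: "(f, a) \<in> G \<Longrightarrow> (\<And>x. x \<in> K \<Longrightarrow> 0 \<le> f x) \<Longrightarrow> 0 \<le> a"
  using G unfolding positive_linear_graph_def by blast

lemma positive_linear_graph_mono:
  assumes "(f, a) \<in> G" "(g, b) \<in> G" "\<And>x. x \<in> K \<Longrightarrow> f x \<le> g x"
  shows "a \<le> b"
proof -
  have "((\<lambda>x. g x + (-1) * f x), b + (-1) * a) \<in> G"
    using assms by (intro positive_linear_graph_add positive_linear_graph_scale)
  then have "0 \<le> b + (-1) * a"
    by (rule positive_linear_graph_nonneg) (simp add: assms(3))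
  then show ?thesis by simp
qed

lemma positive_linear_graph_unique:
  assumes "(f, a) \<in> G" "(g, b) \<in> G" "\<And>x. x \<in> K \<Longrightarrow> f x = g x"
  shows "a = b"
proof (rule order.antisym)
  show "a \<le> b" using assms(3) by (intro positive_linear_graph_mono[OF assms(1,2)]) auto
  show "b \<le> a" using assms(3) by (intro positive_linear_graph_mono[OF assms(2,1)]) auto
qed

lemma sandwich_space_add:
  assumes "e \<in> sandwich_space K G" "e' \<in> sandwich_space K G"
  shows "(\<lambda>x. e x + e' x) \<in> sandwich_space K G"
proof -
  obtain f a g b where "(f, a) \<in> G" "(g, b) \<in> G" "\<forall>x\<in>K. f x \<le> e x \<and> e x \<le> g x"
    using assms(1) unfolding sandwich_space_def by blast
  moreover obtain f' a' g' b' where "(f', a') \<in> G" "(g', b') \<in> G" "\<forall>x\<in>K. f' x \<le> e' x \<and> e' x \<le> g' x"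
    using assms(2) unfolding sandwich_space_def by blast
  ultimately show ?thesis
    by (intro sandwich_spaceI[OF positive_linear_graph_add[of f a f' a'] positive_linear_graph_add[of g b g' b']])
      (auto intro: add_mono)
qed

lemma sandwich_space_scale:
  assumes "e \<in> sandwich_space K G"
  shows "(\<lambda>x. c * e x) \<in> sandwich_space K G"
proof -
  obtain f a g b where fg: "(f, a) \<in> G" "(g, b) \<in> G" "\<forall>x\<in>K. f x \<le> e x \<and> e x \<le> g x"
    using assms unfolding sandwich_space_def by blast
  show ?thesis
  proof (cases "0 \<le> c")
    case True
    show ?thesis
      by (rule sandwich_spaceI[OF positive_linear_graph_scale[OF fg(1)] positive_linear_graph_scale[OF fg(2)]])
        (use fg(3) True in \<open>auto intro: mult_left_mono\<close>)
  next
    case False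
    show ?thesis
      by (rule sandwich_spaceI[OF positive_linear_graph_scale[OF fg(2)] positive_linear_graph_scale[OF fg(1)]])
        (use fg(3) False in \<open>auto intro: mult_left_mono_neg\<close>)
  qed
qed

lemma sandwich_space_abs_le:
  assumes "e' \<in> sandwich_space K G" "\<And>x. x \<in> K \<Longrightarrow> \<bar>e x\<bar> \<le> e' x"
  shows "e \<in> sandwich_space K G"
proof -
  obtain f a g b where fg: "(f, a) \<in> G" "(g, b) \<in> G" "\<forall>x\<in>K. f x \<le> e' x \<and> e' x \<le> g x"
    using assms(1) unfolding sandwich_space_def by blast
  show ?thesis
  proof (rule sandwich_spaceI[OF positive_linear_graph_scale[OF fg(2), of "-1"] fg(2)])
    fix x assume "x \<in> K"
    with assms(2)[OF this] fg(3) show "-1 * g x \<le> e x \<and> e x \<le> g x" by (auto simp: abs_le_iff)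
  qed
qed

lemma in_graph_extend:
  assumes "e \<in> sandwich_space K G"
  shows "(e, c) \<in> graph_extend G e c"
proof -
  obtain f a where "(f, a) \<in> G" using assms unfolding sandwich_space_def by blast
  then have "((\<lambda>x. 0 * f x), 0 * a) \<in> G" by (rule positive_linear_graph_scale)
  from graph_extendI[OF this, of 1 e c] show ?thesis by simp
qed

lemma graph_extend_nonneg:
  assumes lower: "\<And>f a. (f, a) \<in> G \<Longrightarrow> (\<forall>x\<in>K. f x \<le> e x) \<Longrightarrow> a \<le> c"
    and upper: "\<And>g b. (g, b) \<in> G \<Longrightarrow> (\<forall>x\<in>K. e x \<le> g x) \<Longrightarrow> c \<le> b"
    and "(f, a) \<in> graph_extend G e c" and nonneg: "\<forall>x\<in>K. 0 \<le> f x"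
  shows "0 \<le> a"
proof -
  obtain f1 a1 t where f: "f = (\<lambda>x. f1 x + t * e x)" "a = a1 + t * c" "(f1, a1) \<in> G"
    using assms(3) unfolding graph_extend_def by blast
  show "0 \<le> a"
  proof (cases t "0::real" rule: linorder_cases)
    case equal
    then show ?thesis using f nonneg positive_linear_graph_nonneg by auto
  next
    case greater
    have "(-1/t) * a1 \<le> c"
    proof (rule lower[OF positive_linear_graph_scale[OF f(3)]], intro ballI)
      fix x assume "x \<in> K"
      then have "0 \<le> f1 x + t * e x" using nonneg f by simp
      then show "(-1/t) * f1 x \<le> e x" using greater by (simp add: field_simps)
    qed
    then show ?thesis using greater f by (simp add: field_simps)
  next
    case less
    have "c \<le> (-1/t) * a1"
    proof (rule upper[OF positive_linear_graph_scale[OF f(3)]], intro ballI)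
      fix x assume "x \<in> K"
      then have "0 \<le> f1 x + t * e x" using nonneg f by simp
      then show "e x \<le> (-1/t) * f1 x" using less by (simp add: field_simps)
    qed
    then show ?thesis using less f by (simp add: field_simps)
  qed
qed

lemma positive_linear_graph_extend:
  assumes "\<And>f a. (f, a) \<in> G \<Longrightarrow> (\<forall>x\<in>K. f x \<le> e x) \<Longrightarrow> a \<le> c"
    and "\<And>g b. (g, b) \<in> G \<Longrightarrow> (\<forall>x\<in>K. e x \<le> g x) \<Longrightarrow> c \<le> b"
  shows "positive_linear_graph K (graph_extend G e c)"
  unfolding positive_linear_graph_def
proof (intro conjI allI impI)
  fix f a g b assume "(f, a) \<in> graph_extend G e c" "(g, b) \<in> graph_extend G e c"
  then obtain f1 a1 t1 f2 a2 t2 where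
    "f = (\<lambda>x. f1 x + t1 * e x)" "a = a1 + t1 * c" "(f1, a1) \<in> G"
    "g = (\<lambda>x. f2 x + t2 * e x)" "b = a2 + t2 * c" "(f2, a2) \<in> G"
    unfolding graph_extend_def by blast
  with graph_extendI[OF positive_linear_graph_add, where t = "t1 + t2" and e = e and c = c]
  show "((\<lambda>x. f x + g x), a + b) \<in> graph_extend G e c"
    by (simp add: algebra_simps)
next
  fix f a r assume "(f, a) \<in> graph_extend G e c"
  then obtain f1 a1 t where "f = (\<lambda>x. f1 x + t * e x)" "a = a1 + t * c" "(f1, a1) \<in> G"
    unfolding graph_extend_def by blast
  with graph_extendI[OF positive_linear_graph_scale, where t = "r * t" and e = e and c = c]
  show "((\<lambda>x. r * f x), r * a) \<in> graph_extend G e c"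
    by (simp add: algebra_simps)
next
  fix f a assume "(f, a) \<in> graph_extend G e c" "\<forall>x\<in>K. 0 \<le> f x"
  with assms show "0 \<le> a" by (rule graph_extend_nonneg)
qed

lemma exists_separating_value:
  assumes "e \<in> sandwich_space K G"
  obtains c where "\<And>f a. (f, a) \<in> G \<Longrightarrow> (\<forall>x\<in>K. f x \<le> e x) \<Longrightarrow> a \<le> c"
    and "\<And>g b. (g, b) \<in> G \<Longrightarrow> (\<forall>x\<in>K. e x \<le> g x) \<Longrightarrow> c \<le> b"
proof -
  define S where "S = {a. \<exists>f. (f, a) \<in> G \<and> (\<forall>x\<in>K. f x \<le> e x)}"
  obtain f0 a0 g0 b0 where fg0: "(f0, a0) \<in> G" "(g0, b0) \<in> G" "\<forall>x\<in>K. f0 x \<le> e x \<and> e x \<le> g0 x"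
    using assms unfolding sandwich_space_def by blast
  have S_upper: "a \<le> b" if "a \<in> S" "(g, b) \<in> G" "\<forall>x\<in>K. e x \<le> g x" for a g b
  proof -
    obtain f where f: "(f, a) \<in> G" "\<forall>x\<in>K. f x \<le> e x" using \<open>a \<in> S\<close> unfolding S_def by blast
    show ?thesis
    proof (rule positive_linear_graph_mono[OF f(1) \<open>(g, b) \<in> G\<close>])
      fix x assume "x \<in> K"
      with f(2) \<open>\<forall>x\<in>K. e x \<le> g x\<close> show "f x \<le> g x" by (meson order_trans)
    qed
  qed
  have "S \<noteq> {}" using fg0 unfolding S_def by blast
  have "bdd_above S"
  proof (rule bdd_aboveI)
    fix a assume "a \<in> S"
    then show "a \<le> b0" using fg0 by (intro S_upper) auto
  qed
  show ?thesis
  proof (rule that[of "Sup S"])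
    fix f a assume "(f, a) \<in> G" "\<forall>x\<in>K. f x \<le> e x"
    then have "a \<in> S" unfolding S_def by blast
    then show "a \<le> Sup S" using \<open>bdd_above S\<close> by (rule cSup_upper)
  next
    fix g b assume "(g, b) \<in> G" "\<forall>x\<in>K. e x \<le> g x"
    then show "Sup S \<le> b" using \<open>S \<noteq> {}\<close> S_upper by (intro cSup_least) auto
  qed
qed

end

lemma positive_linear_graph_Union_chain:
  assumes "\<And>X. X \<in> C \<Longrightarrow> positive_linear_graph K X"
    and "\<And>X Y. X \<in> C \<Longrightarrow> Y \<in> C \<Longrightarrow> X \<subseteq> Y \<or> Y \<subseteq> X"
  shows "positive_linear_graph K (\<Union>C)"
  unfolding positive_linear_graph_def
proof (intro conjI allI impI)
  fix f a g b assume "(f, a) \<in> \<Union>C" "(g, b) \<in> \<Union>C"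
  then obtain X Y where XY: "X \<in> C" "(f, a) \<in> X" "Y \<in> C" "(g, b) \<in> Y" by blast
  then have "(f, a) \<in> X \<union> Y" "(g, b) \<in> X \<union> Y" by auto
  moreover have "X \<union> Y \<in> C" using assms(2)[OF XY(1,3)] XY(1,3) by (metis sup.absorb1 sup.absorb2)
  ultimately show "((\<lambda>x. f x + g x), a + b) \<in> \<Union>C"
    using positive_linear_graph_add[OF assms(1)] by blast
next
  fix f a c assume "(f, a) \<in> \<Union>C"
  then show "((\<lambda>x. c * f x), c * a) \<in> \<Union>C"
    using positive_linear_graph_scale[OF assms(1)] by blast
next
  fix f a assume "(f, a) \<in> \<Union>C" "\<forall>x\<in>K. 0 \<le> f x"
  then show "0 \<le> a" using positive_linear_graph_nonneg[OF assms(1)] by blast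
qed

definition admissible_extension ::
    "'a set \<Rightarrow> (('a \<Rightarrow> real) \<times> real) set \<Rightarrow> (('a \<Rightarrow> real) \<times> real) set \<Rightarrow> bool" where
  "admissible_extension K G0 G \<longleftrightarrow>
     G0 \<subseteq> G \<and> positive_linear_graph K G \<and> fst ` G \<subseteq> sandwich_space K G0"

lemma exists_maximal_admissible_extension:
  assumes "positive_linear_graph K G0"
  obtains G where "admissible_extension K G0 G"
    and "\<And>X. admissible_extension K G0 X \<Longrightarrow> G \<subseteq> X \<Longrightarrow> X = G"
proof -
  define \<A> where "\<A> = Collect (admissible_extension K G0)"
  have "fst ` G0 \<subseteq> sandwich_space K G0"
    using graph_in_sandwich_space by auto
  then have "G0 \<in> \<A>" using assms unfolding \<A>_def admissible_extension_def by blast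
  have "\<exists>U\<in>\<A>. \<forall>X\<in>C. X \<subseteq> U" if C: "C \<in> chains \<A>" for C
  proof (cases "C = {}")
    case True
    then show ?thesis using \<open>G0 \<in> \<A>\<close> by blast
  next
    case False
    have "C \<subseteq> \<A>" "\<And>X Y. X \<in> C \<Longrightarrow> Y \<in> C \<Longrightarrow> X \<subseteq> Y \<or> Y \<subseteq> X"
      using C unfolding chains_def chain_subset_def by blast+
    then have "positive_linear_graph K (\<Union>C)"
      by (intro positive_linear_graph_Union_chain) (auto simp: \<A>_def admissible_extension_def)
    moreover have "G0 \<subseteq> \<Union>C" using False \<open>C \<subseteq> \<A>\<close> unfolding \<A>_def admissible_extension_def by blast
    moreover have "fst ` \<Union>C \<subseteq> sandwich_space K G0"
      using \<open>C \<subseteq> \<A>\<close> unfolding \<A>_def admissible_extension_def by blast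
    ultimately have "\<Union>C \<in> \<A>" unfolding \<A>_def admissible_extension_def by blast
    then show ?thesis by blast
  qed
  then have "\<exists>G\<in>\<A>. \<forall>X\<in>\<A>. G \<subseteq> X \<longrightarrow> X = G" by (intro Zorn_Lemma2) blast
  with that show thesis unfolding \<A>_def by blast
qed

lemma maximal_admissible_extension_total:
  assumes G0: "positive_linear_graph K G0" and G: "admissible_extension K G0 G"
    and maximal: "\<And>X. admissible_extension K G0 X \<Longrightarrow> G \<subseteq> X \<Longrightarrow> X = G"
    and e: "e \<in> sandwich_space K G0"
  shows "\<exists>a. (e, a) \<in> G"
proof -
  have G_linear: "positive_linear_graph K G" and "G0 \<subseteq> G" and G_V: "fst ` G \<subseteq> sandwich_space K G0"
    using G unfolding admissible_extension_def by auto
  have e_G: "e \<in> sandwich_space K G"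
    using e \<open>G0 \<subseteq> G\<close> unfolding sandwich_space_def by blast
  obtain c where "\<And>f a. (f, a) \<in> G \<Longrightarrow> (\<forall>x\<in>K. f x \<le> e x) \<Longrightarrow> a \<le> c"
    and "\<And>g b. (g, b) \<in> G \<Longrightarrow> (\<forall>x\<in>K. e x \<le> g x) \<Longrightarrow> c \<le> b"
    using exists_separating_value[OF G_linear e_G] by blast
  then have "positive_linear_graph K (graph_extend G e c)"
    by (rule positive_linear_graph_extend[OF G_linear])
  moreover have "fst ` graph_extend G e c \<subseteq> sandwich_space K G0"
  proof
    fix f assume "f \<in> fst ` graph_extend G e c"
    then obtain a where "(f, a) \<in> graph_extend G e c" by force
    then obtain f1 a1 t where f: "f = (\<lambda>x. f1 x + t * e x)" "(f1, a1) \<in> G"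
      unfolding graph_extend_def by blast
    have "f1 \<in> sandwich_space K G0" using f(2) G_V by (metis fst_conv image_subset_iff)
    then show "f \<in> sandwich_space K G0"
      unfolding f(1) by (intro sandwich_space_add[OF G0] sandwich_space_scale[OF G0] e)
  qed
  ultimately have "admissible_extension K G0 (graph_extend G e c)"
    using \<open>G0 \<subseteq> G\<close> subset_graph_extend unfolding admissible_extension_def by blast
  with maximal subset_graph_extend have "graph_extend G e c = G" by blast
  with in_graph_extend[OF G_linear e_G] show ?thesis by blast
qed

theorem riesz_extension:
  fixes K :: "'a set" and G0 :: "(('a \<Rightarrow> real) \<times> real) set"
  assumes G0: "positive_linear_graph K G0"
  obtains L where "\<And>f a. (f, a) \<in> G0 \<Longrightarrow> L f = a"
    and "\<And>e e'. e \<in> sandwich_space K G0 \<Longrightarrow> e' \<in> sandwich_space K G0 \<Longrightarrow>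
           L (\<lambda>x. e x + e' x) = L e + L e'"
    and "\<And>e c. e \<in> sandwich_space K G0 \<Longrightarrow> L (\<lambda>x. c * e x) = c * L e"
    and "\<And>e. e \<in> sandwich_space K G0 \<Longrightarrow> (\<And>x. x \<in> K \<Longrightarrow> 0 \<le> e x) \<Longrightarrow> 0 \<le> L e"
proof -
  obtain G where admissible: "admissible_extension K G0 G"
    and maximal: "\<And>X. admissible_extension K G0 X \<Longrightarrow> G \<subseteq> X \<Longrightarrow> X = G"
    using exists_maximal_admissible_extension[OF G0] by blast
  have G: "positive_linear_graph K G" and "G0 \<subseteq> G"
    using admissible unfolding admissible_extension_def by auto
  define L where "L e = (THE a. (e, a) \<in> G)" for e
  have L_eq: "L e = a" if "(e, a) \<in> G" for e a
    unfolding L_def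
  proof (rule the_equality)
    show "(e, a) \<in> G" by fact
    show "b = a" if "(e, b) \<in> G" for b
      using positive_linear_graph_unique[OF G \<open>(e, b) \<in> G\<close> \<open>(e, a) \<in> G\<close>] by simp
  qed
  have L_graph: "(e, L e) \<in> G" if "e \<in> sandwich_space K G0" for e
    using maximal_admissible_extension_total[OF G0 admissible maximal that] L_eq by blast
  show thesis
  proof (rule that)
    show "L f = a" if "(f, a) \<in> G0" for f a
      using that \<open>G0 \<subseteq> G\<close> L_eq by blast
    show "L (\<lambda>x. e x + e' x) = L e + L e'" if "e \<in> sandwich_space K G0" "e' \<in> sandwich_space K G0" for e e'
      using that by (intro L_eq positive_linear_graph_add[OF G] L_graph)
    show "L (\<lambda>x. c * e x) = c * L e" if "e \<in> sandwich_space K G0" for e c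
      using that by (intro L_eq positive_linear_graph_scale[OF G] L_graph)
    show "0 \<le> L e" if "e \<in> sandwich_space K G0" "\<And>x. x \<in> K \<Longrightarrow> 0 \<le> e x" for e
      using that by (intro positive_linear_graph_nonneg[OF G L_graph]) auto
  qed
qed


section \<open>Polynomials and the operator \<open>D(s)\<close>\<close>

abbreviation mpoly_support :: "(('n \<Rightarrow> nat) \<Rightarrow> real) \<Rightarrow> ('n \<Rightarrow> nat) set" where
  "mpoly_support c \<equiv> {\<beta>. c \<beta> \<noteq> 0}"

definition coeff_pairing :: "(('n \<Rightarrow> nat) \<Rightarrow> real) \<Rightarrow> (('n \<Rightarrow> nat) \<Rightarrow> real) \<Rightarrow> real" where
  "coeff_pairing c w = (\<Sum>\<beta>\<in>mpoly_support c. c \<beta> * w \<beta>)"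

definition multi_choose :: "('n::finite \<Rightarrow> nat) \<Rightarrow> ('n \<Rightarrow> nat) \<Rightarrow> real" where
  "multi_choose \<beta> \<alpha> = (\<Prod>i\<in>UNIV. real (\<beta> i choose \<alpha> i))"

lemma poly_fun_eq_coeff_pairing: "poly_fun c x = coeff_pairing c (\<lambda>\<beta>. mono_eval \<beta> x)"
  unfolding poly_fun_def coeff_pairing_def ..

lemma coeff_pairing_eq:
  assumes "finite S" "mpoly_support c \<subseteq> S"
  shows "coeff_pairing c w = (\<Sum>\<beta>\<in>S. c \<beta> * w \<beta>)"
  unfolding coeff_pairing_def by (rule sum.mono_neutral_left) (use assms in auto)

lemma is_mpoly_add: "is_mpoly c \<Longrightarrow> is_mpoly d \<Longrightarrow> is_mpoly (\<lambda>\<beta>. c \<beta> + d \<beta>)"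
  unfolding is_mpoly_def by (rule finite_subset[of _ "mpoly_support c \<union> mpoly_support d"]) auto

lemma is_mpoly_scale: "is_mpoly c \<Longrightarrow> is_mpoly (\<lambda>\<beta>. r * c \<beta>)"
  unfolding is_mpoly_def by (rule finite_subset[of _ "mpoly_support c"]) auto

lemma coeff_pairing_add:
  assumes "is_mpoly c" "is_mpoly d"
  shows "coeff_pairing (\<lambda>\<beta>. c \<beta> + d \<beta>) w = coeff_pairing c w + coeff_pairing d w"
proof -
  let ?S = "mpoly_support c \<union> mpoly_support d"
  have "finite ?S" using assms unfolding is_mpoly_def by simp
  then show ?thesis by (subst (1 2 3) coeff_pairing_eq[of ?S]) (auto simp: sum.distrib algebra_simps)
qed

lemma coeff_pairing_scale: "coeff_pairing (\<lambda>\<beta>. r * c \<beta>) w = r * coeff_pairing c w"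
proof (cases "r = 0")
  case False
  then show ?thesis by (simp add: coeff_pairing_def sum_distrib_left algebra_simps)
qed (simp add: coeff_pairing_def)

lemma coeff_pairing_single: "coeff_pairing (\<lambda>\<beta>. if \<beta> = \<alpha> then 1 else 0) w = w \<alpha>"
  by (subst coeff_pairing_eq[of "{\<alpha>}"]) auto

lemma is_mpoly_single: "is_mpoly (\<lambda>\<beta>. if \<beta> = \<alpha> then 1 else 0)"
  unfolding is_mpoly_def by (rule finite_subset[of _ "{\<alpha>}"]) auto

lemma atMost_multi_index_eq_PiE: "{..\<beta>} = Pi\<^sub>E UNIV (\<lambda>i. {..\<beta> i :: nat})"
  by (auto simp: le_fun_def PiE_iff)

lemma finite_atMost_multi_index: "finite {..\<beta> :: 'n::finite \<Rightarrow> nat}"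
  unfolding atMost_multi_index_eq_PiE by (intro finite_PiE) auto

lemma mono_eval_add: "mono_eval (\<alpha> + \<beta>) x = mono_eval \<alpha> x * mono_eval \<beta> x"
  unfolding mono_eval_def by (simp add: power_add prod.distrib)

lemma mono_eval_abs_le: "\<bar>mono_eval \<alpha> x\<bar> \<le> 1 + mono_eval (\<alpha> + \<alpha>) x"
proof -
  have "0 \<le> (\<bar>mono_eval \<alpha> x\<bar> - 1)\<^sup>2" by simp
  then show ?thesis unfolding mono_eval_add power2_eq_square by (simp add: algebra_simps abs_mult_self_eq)
qed

lemma mono_eval_zero_vec: "mono_eval \<gamma> (0 :: real^'n::finite) = (if \<gamma> = 0 then 1 else 0)"
proof (cases "\<gamma> = 0")
  case False
  then obtain i where "\<gamma> i \<noteq> 0" by (auto simp: fun_eq_iff)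
  then have "(\<Prod>j\<in>UNIV. (0 :: real^'n) $ j ^ \<gamma> j) = 0" by (intro prod_zero) auto
  then show ?thesis using False by (simp add: mono_eval_def)
qed (simp add: mono_eval_def)

lemma mono_eval_binomial:
  fixes x y :: "real^'n::finite"
  shows "mono_eval \<beta> (x + y) =
    (\<Sum>\<alpha>\<in>{..\<beta>}. multi_choose \<beta> \<alpha> * mono_eval \<alpha> y * mono_eval (\<beta> - \<alpha>) x)"
proof -
  have "mono_eval \<beta> (x + y) =
      (\<Prod>i\<in>UNIV. \<Sum>k\<in>{..\<beta> i}. real (\<beta> i choose k) * (y$i)^k * (x$i)^(\<beta> i - k))"
    unfolding mono_eval_def by (simp add: add.commute[of "x $ _"] binomial_ring)
  also have "\<dots> = (\<Sum>\<alpha>\<in>Pi\<^sub>E UNIV (\<lambda>i. {..\<beta> i}).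
      \<Prod>i\<in>UNIV. real (\<beta> i choose \<alpha> i) * (y$i)^(\<alpha> i) * (x$i)^(\<beta> i - \<alpha> i))"
    by (rule prod_sum_PiE) auto
  also have "\<dots> = (\<Sum>\<alpha>\<in>{..\<beta>}. multi_choose \<beta> \<alpha> * mono_eval \<alpha> y * mono_eval (\<beta> - \<alpha>) x)"
    unfolding atMost_multi_index_eq_PiE mono_eval_def multi_choose_def by (simp add: prod.distrib)
  finally show ?thesis .
qed

lemma Dop_index_set_eq: "{\<alpha>. \<exists>\<beta>. c \<beta> \<noteq> 0 \<and> (\<forall>i. \<alpha> i \<le> \<beta> i)} = (\<Union>\<beta>\<in>mpoly_support c. {..\<beta>})"
  by (auto simp: le_fun_def)

lemma finite_Dop_index_set: "is_mpoly c \<Longrightarrow> finite (\<Union>\<beta>\<in>mpoly_support c. {..\<beta> :: 'n::finite \<Rightarrow> nat})"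
  unfolding is_mpoly_def by (auto intro: finite_atMost_multi_index)

lemma Dop_support: "mpoly_support (Dop s c) \<subseteq> (\<Union>\<beta>\<in>mpoly_support c. {..\<beta>})"
proof
  fix \<gamma> assume "\<gamma> \<in> mpoly_support (Dop s c)"
  then obtain \<alpha> where "pdiff \<alpha> c \<gamma> \<noteq> 0" unfolding Dop_def
    by (metis (mono_tags, lifting) mem_Collect_eq mult_zero_right sum.neutral)
  then have "c (\<gamma> + \<alpha>) \<noteq> 0" unfolding pdiff_def by (auto simp: plus_fun_def)
  then show "\<gamma> \<in> (\<Union>\<beta>\<in>mpoly_support c. {..\<beta>})" by (auto simp: le_fun_def)
qed

lemma pdiff_coeff_eq:
  "s \<alpha> / mfact \<alpha> * pdiff \<alpha> c \<gamma> = c (\<gamma> + \<alpha>) * (s \<alpha> * multi_choose (\<gamma> + \<alpha>) \<alpha>)"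
proof -
  have "multi_choose (\<gamma> + \<alpha>) \<alpha> = (\<Prod>i\<in>UNIV. fact (\<gamma> i + \<alpha> i) / fact (\<gamma> i) / fact (\<alpha> i))"
    unfolding multi_choose_def by (intro prod.cong refl) (simp add: binomial_fact)
  also have "\<dots> = (\<Prod>i\<in>UNIV. fact (\<gamma> i + \<alpha> i) / fact (\<gamma> i)) / mfact \<alpha>"
    unfolding mfact_def by (rule prod_dividef)
  finally show ?thesis unfolding pdiff_def by (simp add: plus_fun_def)
qed

lemma sum_shift_multi_index:
  fixes w :: "('n \<Rightarrow> nat) \<Rightarrow> real"
  assumes "finite A" "\<And>\<beta>. c \<beta> \<noteq> 0 \<Longrightarrow> \<alpha> \<le> \<beta> \<Longrightarrow> \<beta> - \<alpha> \<in> A"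
  shows "(\<Sum>\<gamma>\<in>A. c (\<gamma> + \<alpha>) * w (\<gamma> + \<alpha>)) = (\<Sum>\<beta>\<in>{\<beta>\<in>mpoly_support c. \<alpha> \<le> \<beta>}. c \<beta> * w \<beta>)"
proof -
  have "(\<Sum>\<gamma>\<in>A. c (\<gamma> + \<alpha>) * w (\<gamma> + \<alpha>)) = (\<Sum>\<gamma>\<in>{\<gamma>\<in>A. c (\<gamma> + \<alpha>) \<noteq> 0}. c (\<gamma> + \<alpha>) * w (\<gamma> + \<alpha>))"
    by (rule sum.mono_neutral_right[OF assms(1)]) auto
  also have "\<dots> = (\<Sum>\<beta>\<in>{\<beta>\<in>mpoly_support c. \<alpha> \<le> \<beta>}. c \<beta> * w \<beta>)"
  proof (rule sum.reindex_bij_witness[where j = "\<lambda>\<gamma>. \<gamma> + \<alpha>" and i = "\<lambda>\<beta>. \<beta> - \<alpha>"])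
    fix \<beta> assume "\<beta> \<in> {\<beta>\<in>mpoly_support c. \<alpha> \<le> \<beta>}"
    moreover from this have "\<beta> - \<alpha> + \<alpha> = \<beta>" by (auto simp: fun_eq_iff le_fun_def)
    ultimately show "\<beta> - \<alpha> + \<alpha> = \<beta>" "\<beta> - \<alpha> \<in> {\<gamma>\<in>A. c (\<gamma> + \<alpha>) \<noteq> 0}" using assms(2) by auto
  qed (auto simp: fun_eq_iff le_fun_def)
  finally show ?thesis .
qed

lemma poly_fun_Dop:
  assumes c: "is_mpoly c"
  shows "poly_fun (Dop s c) x =
    coeff_pairing c (\<lambda>\<beta>. \<Sum>\<alpha>\<in>{..\<beta>}. s \<alpha> * multi_choose \<beta> \<alpha> * mono_eval (\<beta> - \<alpha>) x)"
proof -
  define A where "A = (\<Union>\<beta>\<in>mpoly_support c. {..\<beta>})"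
  define B where "B = mpoly_support c"
  define T where "T \<alpha> \<beta> = s \<alpha> * multi_choose \<beta> \<alpha> * mono_eval (\<beta> - \<alpha>) x" for \<alpha> \<beta>
  have A: "finite A" unfolding A_def using finite_Dop_index_set[OF c] .
  have B: "finite B" using c unfolding B_def is_mpoly_def .
  have "poly_fun (Dop s c) x = (\<Sum>\<gamma>\<in>A. Dop s c \<gamma> * mono_eval \<gamma> x)"
    unfolding poly_fun_eq_coeff_pairing A_def by (rule coeff_pairing_eq[OF A[unfolded A_def] Dop_support])
  also have "\<dots> = (\<Sum>\<alpha>\<in>A. \<Sum>\<gamma>\<in>A. s \<alpha> / mfact \<alpha> * pdiff \<alpha> c \<gamma> * mono_eval \<gamma> x)"
    unfolding Dop_def Dop_index_set_eq A_def[symmetric] sum_distrib_right by (rule sum.swap)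
  also have "\<dots> = (\<Sum>\<alpha>\<in>A. \<Sum>\<beta>\<in>{\<beta>\<in>B. \<alpha> \<le> \<beta>}. c \<beta> * T \<alpha> \<beta>)"
  proof (rule sum.cong[OF refl])
    fix \<alpha> assume "\<alpha> \<in> A"
    have "(\<Sum>\<gamma>\<in>A. s \<alpha> / mfact \<alpha> * pdiff \<alpha> c \<gamma> * mono_eval \<gamma> x) =
        (\<Sum>\<gamma>\<in>A. c (\<gamma> + \<alpha>) * T \<alpha> (\<gamma> + \<alpha>))"
      unfolding pdiff_coeff_eq T_def by (simp add: mult.assoc)
    also have "\<dots> = (\<Sum>\<beta>\<in>{\<beta>\<in>B. \<alpha> \<le> \<beta>}. c \<beta> * T \<alpha> \<beta>)"
      unfolding B_def by (rule sum_shift_multi_index[OF A]) (force simp: A_def le_fun_def)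
    finally show "(\<Sum>\<gamma>\<in>A. s \<alpha> / mfact \<alpha> * pdiff \<alpha> c \<gamma> * mono_eval \<gamma> x) =
        (\<Sum>\<beta>\<in>{\<beta>\<in>B. \<alpha> \<le> \<beta>}. c \<beta> * T \<alpha> \<beta>)" .
  qed
  also have "\<dots> = (\<Sum>\<beta>\<in>B. \<Sum>\<alpha>\<in>{\<alpha>\<in>A. \<alpha> \<le> \<beta>}. c \<beta> * T \<alpha> \<beta>)"
    by (rule sum.swap_restrict[OF A B])
  also have "\<dots> = (\<Sum>\<beta>\<in>B. c \<beta> * (\<Sum>\<alpha>\<in>{..\<beta>}. T \<alpha> \<beta>))"
  proof (rule sum.cong[OF refl])
    fix \<beta> assume "\<beta> \<in> B"
    then have "{\<alpha>\<in>A. \<alpha> \<le> \<beta>} = {..\<beta>}" unfolding A_def B_def by auto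
    then show "(\<Sum>\<alpha>\<in>{\<alpha>\<in>A. \<alpha> \<le> \<beta>}. c \<beta> * T \<alpha> \<beta>) = c \<beta> * (\<Sum>\<alpha>\<in>{..\<beta>}. T \<alpha> \<beta>)"
      by (simp add: sum_distrib_left)
  qed
  finally show ?thesis unfolding coeff_pairing_def B_def T_def .
qed

lemma poly_fun_Dop_at_zero:
  fixes c :: "('n::finite \<Rightarrow> nat) \<Rightarrow> real"
  assumes "is_mpoly c"
  shows "poly_fun (Dop s c) 0 = coeff_pairing c s"
proof -
  have "(\<Sum>\<alpha>\<in>{..\<beta>}. s \<alpha> * multi_choose \<beta> \<alpha> * mono_eval (\<beta> - \<alpha>) (0 :: real^'n)) = s \<beta>"
    for \<beta> :: "'n \<Rightarrow> nat"
  proof -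
    have "\<beta> - \<alpha> \<noteq> 0" if "\<alpha> \<in> {..\<beta>} - {\<beta>}" for \<alpha>
      using that by (auto simp: fun_eq_iff le_fun_def intro: le_antisym)
    then have "(\<Sum>\<alpha>\<in>{..\<beta>}. s \<alpha> * multi_choose \<beta> \<alpha> * mono_eval (\<beta> - \<alpha>) (0 :: real^'n)) =
        (\<Sum>\<alpha>\<in>{\<beta>}. s \<alpha> * multi_choose \<beta> \<alpha> * mono_eval (\<beta> - \<alpha>) (0 :: real^'n))"
      by (intro sum.mono_neutral_right finite_atMost_multi_index) (auto simp: mono_eval_zero_vec)
    then show ?thesis by (simp add: mono_eval_zero_vec multi_choose_def)
  qed
  then show ?thesis unfolding poly_fun_Dop[OF assms] coeff_pairing_def by simp
qed

lemma
  fixes M :: "(real^'n::finite) measure"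
  assumes integrable: "\<And>\<alpha>. integrable M (mono_eval \<alpha>)"
  shows integrable_shifted_mono_eval: "integrable M (\<lambda>y. mono_eval \<beta> (x + y))"
    and integral_shifted_mono_eval: "integral\<^sup>L M (\<lambda>y. mono_eval \<beta> (x + y)) =
      (\<Sum>\<alpha>\<in>{..\<beta>}. integral\<^sup>L M (mono_eval \<alpha>) * multi_choose \<beta> \<alpha> * mono_eval (\<beta> - \<alpha>) x)"
proof -
  have summand: "integrable M (\<lambda>y. multi_choose \<beta> \<alpha> * mono_eval \<alpha> y * mono_eval (\<beta> - \<alpha>) x)" for \<alpha>
    using integrable by (intro integrable_mult_left integrable_mult_right)
  then show "integrable M (\<lambda>y. mono_eval \<beta> (x + y))"
    unfolding mono_eval_binomial by (rule Bochner_Integration.integrable_sum)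
  have "integral\<^sup>L M (\<lambda>y. mono_eval \<beta> (x + y)) =
      (\<Sum>\<alpha>\<in>{..\<beta>}. integral\<^sup>L M (\<lambda>y. multi_choose \<beta> \<alpha> * mono_eval \<alpha> y * mono_eval (\<beta> - \<alpha>) x))"
    unfolding mono_eval_binomial by (rule Bochner_Integration.integral_sum[OF summand])
  then show "integral\<^sup>L M (\<lambda>y. mono_eval \<beta> (x + y)) =
      (\<Sum>\<alpha>\<in>{..\<beta>}. integral\<^sup>L M (mono_eval \<alpha>) * multi_choose \<beta> \<alpha> * mono_eval (\<beta> - \<alpha>) x)"
    by (simp add: mult_ac)
qed

theorem moment_seq_imp_K_pos_preserver:
  fixes K :: "(real^'n::finite) set"
  assumes "moment_seq (sharp K) s" and "closed (sharp K)"
  shows "K_pos_preserver K (Dop s)"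
proof -
  obtain M :: "(real^'n) measure" where M: "sets M = sets borel"
    and null: "emeasure M (space M - sharp K) = 0"
    and integrable: "\<And>\<alpha>. integrable M (mono_eval \<alpha>)" and moments: "\<And>\<alpha>. s \<alpha> = integral\<^sup>L M (mono_eval \<alpha>)"
    using assms(1) unfolding moment_seq_def by blast
  have "AE y in M. y \<in> sharp K"
  proof (rule AE_I')
    have "sharp K \<in> sets M" using assms(2) M by (simp add: borel_closed)
    then show "space M - sharp K \<in> null_sets M" using null by (auto simp: null_sets_def)
  qed (auto simp: sets_eq_imp_space_eq[OF M])
  show ?thesis unfolding K_pos_preserver_def
  proof (intro allI impI ballI)
    fix c x assume c: "is_mpoly c \<and> (\<forall>x\<in>K. 0 \<le> poly_fun c x)" and "x \<in> K"
    have "poly_fun (Dop s c) x = coeff_pairing c (\<lambda>\<beta>. integral\<^sup>L M (\<lambda>y. mono_eval \<beta> (x + y)))"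
      using c by (simp add: poly_fun_Dop integral_shifted_mono_eval[OF integrable] moments)
    also have "\<dots> = integral\<^sup>L M (\<lambda>y. poly_fun c (x + y))"
      unfolding poly_fun_eq_coeff_pairing coeff_pairing_def
      by (subst Bochner_Integration.integral_sum) (auto intro: integrable_shifted_mono_eval[OF integrable])
    also have "\<dots> \<ge> 0"
    proof (rule integral_nonneg_AE)
      show "AE y in M. 0 \<le> poly_fun c (x + y)"
        using \<open>AE y in M. y \<in> sharp K\<close>
      proof eventually_elim
        fix y assume "y \<in> sharp K"
        then have "y + x \<in> K" using \<open>x \<in> K\<close> unfolding sharp_def by blast
        then show "0 \<le> poly_fun c (x + y)" using c by (simp add: add.commute)
      qed
    qed
    finally show "0 \<le> poly_fun (Dop s c) x" .
  qed
qed

definition moment_graph :: "(('n::finite \<Rightarrow> nat) \<Rightarrow> real) \<Rightarrow> ((real^'n \<Rightarrow> real) \<times> real) set" where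
  "moment_graph s = {(poly_fun c, coeff_pairing c s) | c. is_mpoly c}"

lemma mono_eval_in_moment_graph: "(mono_eval \<alpha>, s \<alpha>) \<in> moment_graph s"
proof -
  have "mono_eval \<alpha> = poly_fun (\<lambda>\<beta>. if \<beta> = \<alpha> then 1 else 0)"
    by (intro ext) (simp only: poly_fun_eq_coeff_pairing coeff_pairing_single)
  then show ?thesis
    unfolding moment_graph_def
    by (intro CollectI exI[of _ "\<lambda>\<beta>. if \<beta> = \<alpha> then 1 else 0"]) (simp add: is_mpoly_single coeff_pairing_single)
qed

text \<open>The graph is positive because \<open>(D(s) p)(0)\<close> is the value of the moment functional at \<open>p\<close>.\<close>

lemma positive_linear_moment_graph:
  assumes "0 \<in> K" "K_pos_preserver K (Dop s)"
  shows "positive_linear_graph K (moment_graph s)"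
  unfolding positive_linear_graph_def
proof (intro conjI allI impI)
  fix f a g b assume "(f, a) \<in> moment_graph s" "(g, b) \<in> moment_graph s"
  then obtain c d where "is_mpoly c" "f = poly_fun c" "a = coeff_pairing c s"
    and "is_mpoly d" "g = poly_fun d" "b = coeff_pairing d s"
    unfolding moment_graph_def by blast
  then show "((\<lambda>x. f x + g x), a + b) \<in> moment_graph s"
    unfolding moment_graph_def
    by (intro CollectI exI[of _ "\<lambda>\<beta>. c \<beta> + d \<beta>"])
      (simp add: is_mpoly_add coeff_pairing_add poly_fun_eq_coeff_pairing fun_eq_iff)
next
  fix f a r assume "(f, a) \<in> moment_graph s"
  then obtain c where "is_mpoly c" "f = poly_fun c" "a = coeff_pairing c s"
    unfolding moment_graph_def by blast
  then show "((\<lambda>x. r * f x), r * a) \<in> moment_graph s"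
    unfolding moment_graph_def
    by (intro CollectI exI[of _ "\<lambda>\<beta>. r * c \<beta>"])
      (simp add: is_mpoly_scale coeff_pairing_scale poly_fun_eq_coeff_pairing fun_eq_iff)
next
  fix f a assume "(f, a) \<in> moment_graph s" "\<forall>x\<in>K. 0 \<le> f x"
  then obtain c where c: "is_mpoly c" "f = poly_fun c" "a = coeff_pairing c s"
    unfolding moment_graph_def by blast
  with assms \<open>\<forall>x\<in>K. 0 \<le> f x\<close> have "0 \<le> poly_fun (Dop s c) 0"
    unfolding K_pos_preserver_def by blast
  then show "0 \<le> a" using c by (simp add: poly_fun_Dop_at_zero)
qed

lemma sharp_convex_cone:
  assumes "convex K" "cone K" "K \<noteq> {}"
  shows "sharp K = K"
proof
  have "0 \<in> K" using assms(2,3) cone_contains_0 by blast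
  then show "sharp K \<subseteq> K" unfolding sharp_def by force
  have "\<forall>x\<in>K. \<forall>y\<in>K. x + y \<in> K" using convex_cone[of K] assms(1,2) by simp
  then show "K \<subseteq> sharp K" unfolding sharp_def by blast
qed

section \<open>Cantor space and binary expansions\<close>

type_synonym 'n cantor = "'n \<times> nat \<Rightarrow> bool"

definition agree_upto :: "nat \<Rightarrow> 'n cantor \<Rightarrow> 'n cantor \<Rightarrow> bool" where
  "agree_upto N \<omega> \<omega>' \<longleftrightarrow> (\<forall>i j. j < N \<longrightarrow> \<omega> (i, j) = \<omega>' (i, j))"

definition depends_upto :: "nat \<Rightarrow> ('n cantor \<Rightarrow> 'b) \<Rightarrow> bool" where
  "depends_upto N F \<longleftrightarrow> (\<forall>\<omega> \<omega>'. agree_upto N \<omega> \<omega>' \<longrightarrow> F \<omega> = F \<omega>')"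

definition cylinders :: "'n cantor set set" where
  "cylinders = {A. \<exists>N. depends_upto N (\<lambda>\<omega>. \<omega> \<in> A)}"

lemma depends_upto_mono: "depends_upto N F \<Longrightarrow> N \<le> M \<Longrightarrow> depends_upto M F"
  unfolding depends_upto_def agree_upto_def by auto

lemma vimage_in_cylinders:
  assumes "depends_upto N F"
  shows "F -` B \<in> cylinders"
proof -
  have "depends_upto N (\<lambda>\<omega>. \<omega> \<in> F -` B)" using assms unfolding depends_upto_def by simp
  then show ?thesis unfolding cylinders_def by blast
qed

lemma ring_of_sets_cylinders: "ring_of_sets UNIV (cylinders :: 'n cantor set set)"
  unfolding ring_of_sets_iff
proof (intro conjI ballI)
  show "cylinders \<subseteq> Pow UNIV" "{} \<in> cylinders" by (auto simp: cylinders_def depends_upto_def)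
next
  fix A B :: "'n cantor set" assume "A \<in> cylinders" "B \<in> cylinders"
  then obtain N M where "depends_upto N (\<lambda>\<omega>. \<omega> \<in> A)" "depends_upto M (\<lambda>\<omega>. \<omega> \<in> B)"
    unfolding cylinders_def by blast
  then have "depends_upto (max N M) (\<lambda>\<omega>. \<omega> \<in> A)" "depends_upto (max N M) (\<lambda>\<omega>. \<omega> \<in> B)"
    by (auto elim: depends_upto_mono)
  then have "depends_upto (max N M) (\<lambda>\<omega>. \<omega> \<in> A \<union> B)" "depends_upto (max N M) (\<lambda>\<omega>. \<omega> \<in> A - B)"
    unfolding depends_upto_def by auto
  then show "A \<union> B \<in> cylinders" "A - B \<in> cylinders" unfolding cylinders_def by blast+
qed

lemma finite_range_depends_upto:
  fixes F :: "'n::finite cantor \<Rightarrow> 'b"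
  assumes "depends_upto N F"
  shows "finite (range F)"
proof -
  define D where "D = (UNIV :: 'n set) \<times> {..<N}"
  have "F \<omega> = F (\<lambda>p. p \<in> {p \<in> D. \<omega> p})" for \<omega>
    using assms unfolding depends_upto_def agree_upto_def D_def by auto
  then have "range F \<subseteq> (\<lambda>S. F (\<lambda>p. p \<in> S)) ` Pow D" by blast
  moreover have "finite D" unfolding D_def by simp
  ultimately show ?thesis by (simp add: finite_subset)
qed

lemma open_agree_upto: "open {\<omega>'. agree_upto N (\<omega> :: 'n::finite cantor) \<omega>'}"
proof -
  have "{\<omega>'. agree_upto N \<omega> \<omega>'} = (\<Inter>p\<in>UNIV \<times> {..<N}. (\<lambda>\<omega>'. \<omega>' p) -` {\<omega> p})"
    by (auto simp: agree_upto_def)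
  moreover have "open ((\<lambda>\<omega>'. \<omega>' p) -` {\<omega> p})" for p
    using continuous_on_open_vimage[of UNIV "\<lambda>\<omega>'. \<omega>' p"] open_discrete by auto
  ultimately show ?thesis by (simp add: open_INT)
qed

lemma closed_cylinder:
  fixes A :: "'n::finite cantor set"
  assumes "A \<in> cylinders"
  shows "closed A"
proof -
  obtain N where N: "depends_upto N (\<lambda>\<omega>. \<omega> \<in> A)" using assms unfolding cylinders_def by blast
  have "- A = (\<Union>\<omega>\<in>-A. {\<omega>'. agree_upto N \<omega> \<omega>'})"
    using N unfolding depends_upto_def agree_upto_def by auto
  moreover have "open (\<Union>\<omega>\<in>-A. {\<omega>'. agree_upto N \<omega> \<omega>'})" by (intro open_UN ballI open_agree_upto)
  ultimately show ?thesis unfolding closed_def by simp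
qed

lemma compact_cantor: "compact (UNIV :: 'n cantor set)"
proof -
  have "compact_space (euclidean :: bool topology)"
    by (simp add: compact_space_def finite_imp_compact)
  then have "compact_space (product_topology (\<lambda>_. euclidean :: bool topology) (UNIV :: ('n \<times> nat) set))"
    by (simp add: compact_space_product_topology)
  then show ?thesis by (simp add: euclidean_product_topology compact_space_def)
qed

lemma Inter_decseq_cylinders_nonempty:
  fixes A :: "nat \<Rightarrow> 'n::finite cantor set"
  assumes "range A \<subseteq> cylinders" "decseq A" "\<And>k. A k \<noteq> {}"
  shows "(\<Inter>k. A k) \<noteq> {}"
proof -
  have "UNIV \<inter> \<Inter>(range A) \<noteq> {}"
  proof (rule compact_imp_fip[OF compact_cantor])
    show "closed T" if "T \<in> range A" for T using that assms(1) by (auto intro!: closed_cylinder)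
  next
    fix F assume "finite F" "F \<subseteq> range A"
    then obtain I where I: "finite I" "F = A ` I" by (meson finite_subset_image)
    show "UNIV \<inter> \<Inter>F \<noteq> {}"
    proof (cases "I = {}")
      case False
      have "A (Max I) \<subseteq> A k" if "k \<in> I" for k
        using decseqD[OF assms(2) Max_ge[OF I(1) that]] .
      then have "A (Max I) \<subseteq> \<Inter>F" unfolding I(2) by blast
      then show ?thesis using assms(3)[of "Max I"] by blast
    qed (simp add: I(2))
  qed
  then show ?thesis by simp
qed

definition bin_point :: "'n cantor \<Rightarrow> real^'n" where
  "bin_point \<omega> = (\<chi> i. \<Sum>j. of_bool (\<omega> (i, j)) / 2 ^ Suc j)"

definition bin_point_upto :: "nat \<Rightarrow> 'n cantor \<Rightarrow> real^'n" where
  "bin_point_upto N \<omega> = (\<chi> i. \<Sum>j<N. of_bool (\<omega> (i, j)) / 2 ^ Suc j)"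

lemma summable_bin_digits: "summable (\<lambda>j. of_bool (\<omega> (i, j)) / 2 ^ Suc j :: real)"
proof (rule summable_comparison_test'[OF summable_geometric[of "1/2"]])
  show "norm (of_bool (\<omega> (i, j)) / 2 ^ Suc j :: real) \<le> (1/2) ^ j" for j
    by (cases "\<omega> (i, j)") (simp_all add: power_one_over field_simps)
qed simp

lemma bin_point_upto_le: "bin_point_upto N \<omega> $ i \<le> bin_point \<omega> $ i"
  unfolding bin_point_upto_def bin_point_def vec_lambda_beta
  by (rule sum_le_suminf[OF summable_bin_digits]) auto

lemma bin_point_upto_Suc:
  "bin_point_upto (Suc N) \<omega> $ i = bin_point_upto N \<omega> $ i + of_bool (\<omega> (i, N)) / 2 ^ Suc N"
  unfolding bin_point_upto_def by simp

lemma bin_point_le: "bin_point \<omega> $ i \<le> bin_point_upto N \<omega> $ i + 1 / 2 ^ N"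
proof -
  let ?d = "\<lambda>j. of_bool (\<omega> (i, j)) / 2 ^ Suc j :: real"
  have geometric: "(\<lambda>j. (1/2) ^ N * (1/2) ^ Suc j) sums ((1/2) ^ N :: real)"
    using sums_mult[OF power_half_series, of "(1/2) ^ N"] by simp
  have "(\<Sum>j. ?d (j + N)) \<le> (\<Sum>j. (1/2) ^ N * (1/2) ^ Suc j)"
  proof (rule suminf_le)
    show "?d (j + N) \<le> (1/2) ^ N * (1/2) ^ Suc j" for j
      by (cases "\<omega> (i, j + N)") (simp_all add: power_add power_one_over mult_ac)
    show "summable (\<lambda>j. ?d (j + N))"
      by (rule summable_ignore_initial_segment[OF summable_bin_digits])
    show "summable (\<lambda>j. (1/2) ^ N * (1/2) ^ Suc j :: real)"
      using geometric by (rule sums_summable)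
  qed
  also have "\<dots> = (1/2) ^ N" using geometric by (rule sums_unique[symmetric])
  finally show ?thesis
    unfolding bin_point_def bin_point_upto_def
    using suminf_split_initial_segment[OF summable_bin_digits, of \<omega> i N] by (simp add: power_one_over)
qed

lemma bin_point_upto_tendsto: "(\<lambda>N. bin_point_upto N \<omega>) \<longlonglongrightarrow> bin_point \<omega>"
  unfolding bin_point_upto_def bin_point_def
  by (rule vec_tendstoI) (simp only: vec_lambda_beta summable_LIMSEQ[OF summable_bin_digits])

lemma depends_upto_bin_point_upto: "depends_upto N (bin_point_upto N)"
  unfolding depends_upto_def agree_upto_def bin_point_upto_def by (auto intro!: sum.cong)

lemma bin_point_upto_in_cube: "bin_point_upto N \<omega> \<in> cbox 0 1"
proof -
  have "0 \<le> bin_point_upto N \<omega> $ i" for i unfolding bin_point_upto_def by (simp add: sum_nonneg)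
  moreover have "bin_point_upto N \<omega> $ i \<le> 1" for i
    using bin_point_upto_le[of N \<omega> i] bin_point_le[of \<omega> i 0] by (simp add: bin_point_upto_def)
  ultimately show ?thesis by (simp add: interval_cart)
qed

lemma bin_point_in_cube: "bin_point \<omega> \<in> cbox 0 1"
proof -
  have "0 \<le> bin_point \<omega> $ i" "bin_point \<omega> $ i \<le> 1" for i
    using bin_point_upto_le[of 0 \<omega> i] bin_point_le[of \<omega> i 0] by (simp_all add: bin_point_upto_def)
  then show ?thesis by (simp add: interval_cart)
qed

lemma dist_le_card_mult:
  fixes a b :: "real^'n::finite" and r :: real
  assumes "\<And>i. \<bar>a $ i - b $ i\<bar> \<le> r"
  shows "dist a b \<le> CARD('n) * r"
proof -
  have "dist a b \<le> (\<Sum>i\<in>UNIV. \<bar>(a - b) $ i\<bar>)" unfolding dist_norm by (rule norm_le_l1_cart)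
  also have "\<dots> \<le> (\<Sum>i\<in>(UNIV :: 'n set). r)" by (rule sum_mono) (use assms in simp)
  finally show ?thesis by simp
qed

lemma bin_point_upto_uniform_approx:
  fixes G :: "real^'n::finite \<Rightarrow> real"
  assumes G: "continuous_on UNIV G" and "0 < \<epsilon>"
  obtains N where "\<And>\<omega>. \<bar>G (bin_point \<omega>) - G (bin_point_upto N \<omega>)\<bar> \<le> \<epsilon>"
proof -
  have "uniformly_continuous_on (cbox 0 1) G"
    by (rule compact_uniformly_continuous[OF continuous_on_subset[OF G]]) auto
  then obtain \<delta> where "0 < \<delta>" and \<delta>: "\<And>y y'. y \<in> cbox 0 1 \<Longrightarrow> y' \<in> cbox 0 1 \<Longrightarrow>
      dist y' y < \<delta> \<Longrightarrow> dist (G y') (G y) < \<epsilon>"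
    using \<open>0 < \<epsilon>\<close> unfolding uniformly_continuous_on_def by metis
  obtain N where "(1/2) ^ N < \<delta> / CARD('n)"
    using real_arch_pow_inv[of "\<delta> / CARD('n)" "1/2"] \<open>0 < \<delta>\<close> by auto
  then have N: "CARD('n) * (1 / 2 ^ N) < \<delta>" by (simp add: power_one_over field_simps)
  have "dist (bin_point \<omega>) (bin_point_upto N \<omega>) < \<delta>" for \<omega> :: "'n cantor"
  proof -
    have "\<bar>bin_point \<omega> $ i - bin_point_upto N \<omega> $ i\<bar> \<le> 1 / 2 ^ N" for i
      using bin_point_upto_le[of N \<omega> i] bin_point_le[of \<omega> i N] by (simp add: abs_le_iff)
    then have "dist (bin_point \<omega>) (bin_point_upto N \<omega>) \<le> CARD('n) * (1 / 2 ^ N)"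
      by (rule dist_le_card_mult)
    with N show ?thesis by linarith
  qed
  then have "\<bar>G (bin_point \<omega>) - G (bin_point_upto N \<omega>)\<bar> \<le> \<epsilon>" for \<omega>
    using \<delta>[OF bin_point_upto_in_cube bin_point_in_cube] by (simp add: dist_real_def dist_commute less_imp_le)
  then show thesis by (rule that)
qed

definition bin_digits :: "real^'n \<Rightarrow> 'n cantor" where
  "bin_digits y = (\<lambda>(i, j). odd \<lfloor>2 ^ Suc j * y $ i\<rfloor>)"

lemma floor_double: "\<lfloor>2 * a\<rfloor> = 2 * \<lfloor>a\<rfloor> + of_bool (odd \<lfloor>2 * a\<rfloor>)" for a :: real
proof -
  have "2 * \<lfloor>a\<rfloor> \<le> \<lfloor>2 * a\<rfloor>" "\<lfloor>2 * a\<rfloor> < 2 * \<lfloor>a\<rfloor> + 2"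
    by (simp_all add: le_floor_iff floor_less_iff) linarith+
  then have "\<lfloor>2 * a\<rfloor> = 2 * \<lfloor>a\<rfloor> \<or> \<lfloor>2 * a\<rfloor> = 2 * \<lfloor>a\<rfloor> + 1" by linarith
  then show ?thesis by auto
qed

lemma bin_point_upto_bin_digits:
  assumes "0 \<le> y $ i" "y $ i < 1"
  shows "bin_point_upto N (bin_digits y) $ i = \<lfloor>2 ^ N * y $ i\<rfloor> / 2 ^ N"
proof (induction N)
  case 0
  then show ?case using assms by (simp add: bin_point_upto_def floor_eq_iff)
next
  case (Suc N)
  define b :: int where "b = of_bool (odd \<lfloor>2 ^ Suc N * y $ i\<rfloor>)"
  have "bin_point_upto (Suc N) (bin_digits y) $ i = \<lfloor>2 ^ N * y $ i\<rfloor> / 2 ^ N + b / 2 ^ Suc N"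
    unfolding bin_point_upto_Suc Suc by (simp add: bin_digits_def b_def)
  also have "\<dots> = (2 * \<lfloor>2 ^ N * y $ i\<rfloor> + b) / 2 ^ Suc N" by (simp add: field_simps)
  also have "2 * \<lfloor>2 ^ N * y $ i\<rfloor> + b = \<lfloor>2 ^ Suc N * y $ i\<rfloor>"
    using floor_double[of "2 ^ N * y $ i"] by (simp add: b_def mult.assoc)
  finally show ?case .
qed

lemma dyadic_floor_approx: "y - 1 / 2 ^ N \<le> \<lfloor>2 ^ N * y\<rfloor> / 2 ^ N" "\<lfloor>2 ^ N * y\<rfloor> / 2 ^ N \<le> (y :: real)"
proof -
  have "(2 ^ N * y - 1) / 2 ^ N \<le> \<lfloor>2 ^ N * y\<rfloor> / 2 ^ N"
    by (rule divide_right_mono) (linarith, simp)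
  then show "y - 1 / 2 ^ N \<le> \<lfloor>2 ^ N * y\<rfloor> / 2 ^ N" by (simp add: diff_divide_distrib)
  have "\<lfloor>2 ^ N * y\<rfloor> / 2 ^ N \<le> (2 ^ N * y) / 2 ^ N" by (rule divide_right_mono) (linarith, simp)
  then show "\<lfloor>2 ^ N * y\<rfloor> / 2 ^ N \<le> y" by simp
qed

lemma bin_point_bin_digits:
  assumes "\<And>i. 0 \<le> y $ i \<and> y $ i < 1"
  shows "bin_point (bin_digits y) = y"
proof -
  have "(\<lambda>N. bin_point_upto N (bin_digits y) $ i) \<longlonglongrightarrow> y $ i" for i
  proof -
    have "(\<lambda>N. 1 / 2 ^ N :: real) \<longlonglongrightarrow> 0" by (rule LIMSEQ_divide_realpow_zero) simp
    then have lower: "(\<lambda>N. y $ i - 1 / 2 ^ N) \<longlonglongrightarrow> y $ i"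
      using tendsto_diff[OF tendsto_const] by fastforce
    have "(\<lambda>N. \<lfloor>2 ^ N * y $ i\<rfloor> / 2 ^ N) \<longlonglongrightarrow> y $ i"
      by (rule real_tendsto_sandwich[OF always_eventually always_eventually lower tendsto_const])
        (use dyadic_floor_approx in blast)+
    moreover have "bin_point_upto N (bin_digits y) $ i = \<lfloor>2 ^ N * y $ i\<rfloor> / 2 ^ N" for N
      using assms by (simp add: bin_point_upto_bin_digits)
    ultimately show ?thesis by simp
  qed
  then have "(\<lambda>N. bin_point_upto N (bin_digits y)) \<longlonglongrightarrow> y" by (rule vec_tendstoI)
  then show ?thesis using bin_point_upto_tendsto LIMSEQ_unique by blast
qed

section \<open>Squashing \<open>\<real>\<^sup>n\<close> into the unit cube\<close>

definition squash :: "real \<Rightarrow> real" where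
  "squash t = (1 + t / (1 + \<bar>t\<bar>)) / 2"

definition unsquash :: "real \<Rightarrow> real" where
  "unsquash y = (2 * y - 1) / (1 - \<bar>2 * y - 1\<bar>)"

definition squash_vec :: "real^'n \<Rightarrow> real^'n" where
  "squash_vec x = (\<chi> i. squash (x $ i))"

definition unsquash_vec :: "real^'n \<Rightarrow> real^'n" where
  "unsquash_vec y = (\<chi> i. unsquash (y $ i))"

lemma squash_bounds: "0 < squash t" "squash t < 1"
  unfolding squash_def by (auto simp: field_simps abs_if)

lemma unsquash_squash: "unsquash (squash t) = t"
proof -
  have "2 * squash t - 1 = t / (1 + \<bar>t\<bar>)" unfolding squash_def by (simp add: field_simps)
  moreover have "1 - \<bar>t / (1 + \<bar>t\<bar>)\<bar> = 1 / (1 + \<bar>t\<bar>)" by (simp add: field_simps)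
  ultimately show ?thesis unfolding unsquash_def by simp
qed

lemma unsquash_squash_vec: "unsquash_vec (squash_vec x) = x"
  by (simp add: unsquash_vec_def squash_vec_def unsquash_squash vec_eq_iff)

lemma measurable_unsquash_vec: "(unsquash_vec :: real^'n::finite \<Rightarrow> real^'n) \<in> borel_measurable borel"
proof (subst borel_measurable_euclidean_space, intro ballI)
  fix b :: "real^'n" assume "b \<in> Basis"
  then obtain i where b: "b = axis i 1" unfolding Basis_vec_def by auto
  have "(\<lambda>y :: real^'n. y $ i) \<in> borel_measurable borel"
    by (rule borel_measurable_continuous_onI) (intro continuous_intros)
  then have "(\<lambda>y :: real^'n. unsquash (y $ i)) \<in> borel_measurable borel"
    unfolding unsquash_def by measurable
  then show "(\<lambda>y. unsquash_vec y \<bullet> b) \<in> borel_measurable borel"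
    unfolding b unsquash_vec_def by (simp add: inner_axis)
qed

lemma min_squash: "min (squash t) (1 - squash t) = 1 / (2 * (1 + \<bar>t\<bar>))"
proof -
  define u where "u = t / (1 + \<bar>t\<bar>)"
  have "squash t = (1 + u) / 2" unfolding squash_def u_def ..
  then have "1 - squash t = (1 - u) / 2" by simp
  then have "min (squash t) (1 - squash t) = (1 - \<bar>u\<bar>) / 2" by (simp add: min_def abs_if)
  moreover have "1 - \<bar>u\<bar> = 1 / (1 + \<bar>t\<bar>)" by (simp add: u_def field_simps)
  ultimately show ?thesis by simp
qed

text \<open>Continuous cutoffs exhausting the open cube \<open>(0, 1)\<^sup>n\<close> from inside.\<close>

definition cutoff :: "nat \<Rightarrow> real \<Rightarrow> real" where
  "cutoff k t = max 0 (min 1 (4 * ((real k + 2) * min t (1 - t)) - 1))"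

definition cube_cutoff :: "nat \<Rightarrow> real^'n \<Rightarrow> real" where
  "cube_cutoff k y = (\<Prod>i\<in>UNIV. cutoff k (y $ i))"

lemma cutoff_bounds: "0 \<le> cutoff k t" "cutoff k t \<le> 1"
  unfolding cutoff_def by auto

lemma cube_cutoff_bounds: "0 \<le> cube_cutoff k y" "cube_cutoff k y \<le> 1"
  unfolding cube_cutoff_def by (auto intro: prod_nonneg prod_le_1 cutoff_bounds)

lemma continuous_on_cube_cutoff: "continuous_on UNIV (cube_cutoff k)"
  unfolding cube_cutoff_def cutoff_def by (intro continuous_intros)

lemma cutoff_eq_0: "(real k + 2) * min t (1 - t) \<le> 1/4 \<Longrightarrow> cutoff k t = 0"
  unfolding cutoff_def by (simp add: max_def min_def)

lemma cutoff_eq_1: "1/2 \<le> (real k + 2) * min t (1 - t) \<Longrightarrow> cutoff k t = 1"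
  unfolding cutoff_def by (simp add: max_def min_def)

lemma cube_cutoff_mono:
  assumes "y \<in> cbox 0 1" "k \<le> k'"
  shows "cube_cutoff k y \<le> cube_cutoff k' y"
  unfolding cube_cutoff_def
proof (intro prod_mono conjI cutoff_bounds)
  fix i
  have "0 \<le> min (y $ i) (1 - y $ i)" using assms(1) by (simp add: interval_cart)
  then have "(real k + 2) * min (y $ i) (1 - y $ i) \<le> (real k' + 2) * min (y $ i) (1 - y $ i)"
    using assms(2) by (intro mult_right_mono) auto
  then show "cutoff k (y $ i) \<le> cutoff k' (y $ i)"
    unfolding cutoff_def by (intro max.mono min.mono order.refl diff_right_mono) simp_all
qed

lemma cube_cutoff_outside_box:
  assumes "y \<notin> box 0 1"
  shows "cube_cutoff k y = 0"
proof -
  obtain i where "\<not> (0 < y $ i \<and> y $ i < 1)" using assms by (auto simp: mem_box_cart)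
  then have "min (y $ i) (1 - y $ i) \<le> 0" by auto
  then have "cutoff k (y $ i) = 0" by (intro cutoff_eq_0) (simp add: mult_nonneg_nonpos order_trans[of _ 0])
  then show ?thesis unfolding cube_cutoff_def by (intro prod_zero) auto
qed

lemma cube_cutoff_eventually_1:
  assumes "y \<in> box 0 1"
  shows "eventually (\<lambda>k. cube_cutoff k y = 1) sequentially"
proof -
  have "eventually (\<lambda>k. cutoff k (y $ i) = 1) sequentially" for i
  proof -
    define m where "m = min (y $ i) (1 - y $ i)"
    have "0 < m" using assms unfolding m_def by (simp add: mem_box_cart)
    obtain n :: nat where "1 / m \<le> n" using real_arch_simple by blast
    then have "1 \<le> real n * m" using \<open>0 < m\<close> by (simp add: field_simps)
    have "cutoff k (y $ i) = 1" if "n \<le> k" for k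
    proof (rule cutoff_eq_1)
      have "real n * m \<le> (real k + 2) * m" using that \<open>0 < m\<close> by (intro mult_right_mono) auto
      then show "1/2 \<le> (real k + 2) * min (y $ i) (1 - y $ i)"
        using \<open>1 \<le> real n * m\<close> unfolding m_def by linarith
    qed
    then show ?thesis by (rule eventually_sequentiallyI)
  qed
  then have "eventually (\<lambda>k. \<forall>i. cutoff k (y $ i) = 1) sequentially" by (rule eventually_all_finite)
  then show ?thesis by eventually_elim (simp add: cube_cutoff_def)
qed

lemma one_minus_cube_cutoff_squash: "1 - cube_cutoff k (squash_vec x) \<le> (norm x)\<^sup>2 / (real k + 1)\<^sup>2"
proof (cases "\<forall>i. cutoff k (squash (x $ i)) = 1")
  case True
  then show ?thesis by (simp add: cube_cutoff_def squash_vec_def)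
next
  case False
  then obtain i where "cutoff k (squash (x $ i)) \<noteq> 1" by blast
  then have "(real k + 2) * (1 / (2 * (1 + \<bar>x $ i\<bar>))) < 1/2"
    using cutoff_eq_1[of k "squash (x $ i)"] by (force simp: min_squash)
  then have "real k + 1 \<le> \<bar>x $ i\<bar>" by (simp add: field_simps)
  also have "\<dots> \<le> norm x" by (rule component_le_norm_cart)
  finally have "1 \<le> (norm x)\<^sup>2 / (real k + 1)\<^sup>2" by (simp add: power_mono)
  then show ?thesis using cube_cutoff_bounds(1)[of k "squash_vec x"] by linarith
qed

definition cube_clamp :: "nat \<Rightarrow> real^'n \<Rightarrow> real^'n" where
  "cube_clamp k y = (\<chi> i. max (1 / (4 * (real k + 2))) (min (1 - 1 / (4 * (real k + 2))) (y $ i)))"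

text \<open>\<open>cube_cutoff k y * p (unsquash_vec y)\<close>, written so as to be visibly continuous: the clamp
  keeps \<open>unsquash\<close> away from its poles and changes nothing where the cutoff is nonzero.\<close>

definition cutoff_lift :: "nat \<Rightarrow> (real^'n \<Rightarrow> real) \<Rightarrow> real^'n \<Rightarrow> real" where
  "cutoff_lift k p y = cube_cutoff k y * p (unsquash_vec (cube_clamp k y))"

lemma continuous_on_cutoff_lift:
  fixes p :: "real^'n::finite \<Rightarrow> real"
  assumes "continuous_on UNIV p"
  shows "continuous_on UNIV (cutoff_lift k p)"
proof -
  define d where "d = 1 / (4 * (real k + 2))"
  have d: "0 < d" "d \<le> 1/8" unfolding d_def by (simp_all add: field_simps)
  have "1 - \<bar>2 * max d (min (1 - d) t) - 1\<bar> \<noteq> 0" for t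
    using d by (auto simp: abs_if max_def min_def)
  then have unsquash_clamp: "continuous_on UNIV (\<lambda>t. unsquash (max d (min (1 - d) t)))"
    unfolding unsquash_def by (intro continuous_intros) auto
  have "continuous_on UNIV (\<lambda>y :: real^'n. unsquash (max d (min (1 - d) (y $ i))))" for i
    by (rule continuous_on_compose2[OF unsquash_clamp]) (auto intro: continuous_intros)
  then have "continuous_on UNIV (\<lambda>y :: real^'n. \<chi> i. unsquash (max d (min (1 - d) (y $ i))))"
    by (rule continuous_on_vec_lambda)
  moreover have "unsquash_vec (cube_clamp k y) = (\<chi> i. unsquash (max d (min (1 - d) (y $ i))))" for y :: "real^'n"
    by (simp add: unsquash_vec_def cube_clamp_def d_def)
  ultimately have "continuous_on UNIV (\<lambda>y :: real^'n. p (unsquash_vec (cube_clamp k y)))"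
    by (intro continuous_on_compose2[OF assms]) auto
  then show ?thesis
    unfolding cutoff_lift_def by (rule continuous_on_mult[OF continuous_on_cube_cutoff])
qed

lemma cutoff_lift_eq: "cutoff_lift k p y = cube_cutoff k y * p (unsquash_vec y)"
proof (cases "cube_cutoff k y = 0")
  case False
  then have "cutoff k (y $ i) \<noteq> 0" for i unfolding cube_cutoff_def by auto
  then have "1/4 < (real k + 2) * min (y $ i) (1 - y $ i)" for i
    using cutoff_eq_0 by (meson not_le)
  then have inside: "1 / (4 * (real k + 2)) < y $ i \<and> y $ i < 1 - 1 / (4 * (real k + 2))" for i
  proof -
    have "1/4 < (real k + 2) * y $ i" "1/4 < (real k + 2) * (1 - y $ i)"
      using \<open>1/4 < (real k + 2) * min (y $ i) (1 - y $ i)\<close>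
        mult_left_mono[OF min.cobounded1, of "real k + 2" "y $ i" "1 - y $ i"]
        mult_left_mono[OF min.cobounded2, of "real k + 2" "y $ i" "1 - y $ i"] by linarith+
    then show ?thesis by (simp add: field_simps)
  qed
  have "max (1 / (4 * (real k + 2))) (min (1 - 1 / (4 * (real k + 2))) (y $ i)) = y $ i" for i
    using inside[of i] by (simp add: max_def min_def)
  then have "cube_clamp k y = y" by (simp add: cube_clamp_def vec_eq_iff)
  then show ?thesis by (simp add: cutoff_lift_def)
qed (simp add: cutoff_lift_def)

section \<open>Haviland's theorem\<close>

definition cantor_code :: "real^'n \<Rightarrow> 'n cantor" where
  "cantor_code x = bin_digits (squash_vec x)"

text \<open>\<open>decode\<close> inverts \<open>cantor_code\<close>. Where \<open>bin_point \<omega>\<close> lies on the boundary of the cube it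
  returns junk (\<open>unsquash\<close> divides by zero there), so only its values on \<open>box_codes\<close> matter.\<close>

definition decode :: "'n cantor \<Rightarrow> real^'n" where
  "decode \<omega> = unsquash_vec (bin_point \<omega>)"

lemma bin_point_cantor_code: "bin_point (cantor_code x) = squash_vec x"
  unfolding cantor_code_def
  by (rule bin_point_bin_digits) (simp add: squash_vec_def squash_bounds less_imp_le)

definition box_codes :: "'n::finite cantor set" where
  "box_codes = {\<omega>. bin_point \<omega> \<in> box 0 1}"

locale positive_functional =
  fixes K :: "(real^'n::finite) set" and V :: "(real^'n \<Rightarrow> real) set"
    and L :: "(real^'n \<Rightarrow> real) \<Rightarrow> real" and s :: "('n \<Rightarrow> nat) \<Rightarrow> real"
  assumes closed_K: "closed K" and K_nonempty: "K \<noteq> {}"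
    and mono_eval_in_V: "mono_eval \<alpha> \<in> V"
    and V_add: "e \<in> V \<Longrightarrow> e' \<in> V \<Longrightarrow> (\<lambda>x. e x + e' x) \<in> V"
    and V_scale: "e \<in> V \<Longrightarrow> (\<lambda>x. c * e x) \<in> V"
    and V_abs_le: "e' \<in> V \<Longrightarrow> (\<And>x. x \<in> K \<Longrightarrow> \<bar>e x\<bar> \<le> e' x) \<Longrightarrow> e \<in> V"
    and L_add: "e \<in> V \<Longrightarrow> e' \<in> V \<Longrightarrow> L (\<lambda>x. e x + e' x) = L e + L e'"
    and L_scale: "e \<in> V \<Longrightarrow> L (\<lambda>x. c * e x) = c * L e"
    and L_nonneg: "e \<in> V \<Longrightarrow> (\<And>x. x \<in> K \<Longrightarrow> 0 \<le> e x) \<Longrightarrow> 0 \<le> L e"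
    and L_mono_eval: "L (mono_eval \<alpha>) = s \<alpha>"
begin

lemma V_const: "(\<lambda>_. c) \<in> V"
  using V_scale[OF mono_eval_in_V[of 0], of c] by (simp add: mono_eval_def)

lemma L_const: "L (\<lambda>_. c) = c * s 0"
  using L_scale[OF mono_eval_in_V[of 0], of c] by (simp add: mono_eval_def L_mono_eval)

lemma V_bounded: "(\<And>x. x \<in> K \<Longrightarrow> \<bar>e x\<bar> \<le> B) \<Longrightarrow> e \<in> V"
  by (rule V_abs_le[OF V_const])

lemma V_diff: "e \<in> V \<Longrightarrow> e' \<in> V \<Longrightarrow> (\<lambda>x. e x - e' x) \<in> V"
  using V_add[OF _ V_scale, of e e' "-1"] by simp

lemma L_diff: "e \<in> V \<Longrightarrow> e' \<in> V \<Longrightarrow> L (\<lambda>x. e x - e' x) = L e - L e'"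
  using L_add[OF _ V_scale, of e e' "-1"] L_scale[of e' "-1"] by simp

lemma L_mono: "e \<in> V \<Longrightarrow> e' \<in> V \<Longrightarrow> (\<And>x. x \<in> K \<Longrightarrow> e x \<le> e' x) \<Longrightarrow> L e \<le> L e'"
  using L_nonneg[OF V_diff, of e' e] L_diff[of e' e] by simp

lemma L_abs_le:
  assumes "e' \<in> V" "\<And>x. x \<in> K \<Longrightarrow> \<bar>e x\<bar> \<le> e' x"
  shows "\<bar>L e\<bar> \<le> L e'"
proof -
  have e: "e \<in> V" by (rule V_abs_le[OF assms])
  have "L e \<le> L e'" using assms by (intro L_mono e) (auto simp: abs_le_iff)
  moreover have "L (\<lambda>x. -1 * e x) \<le> L e'"
    by (rule L_mono[OF V_scale[OF e] assms(1)]) (use assms(2) in \<open>force simp: abs_le_iff\<close>)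
  then have "- L e \<le> L e'" using L_scale[OF e, of "-1"] by simp
  ultimately show ?thesis by simp
qed

lemma s_zero_nonneg: "0 \<le> s 0"
  using L_nonneg[OF V_const, of 1] L_const[of 1] by simp

lemma L_uniform_approx:
  assumes "e \<in> V" "e' \<in> V" "\<And>x. x \<in> K \<Longrightarrow> \<bar>e x - e' x\<bar> \<le> \<epsilon>"
  shows "\<bar>L e - L e'\<bar> \<le> \<epsilon> * s 0"
  using L_abs_le[OF V_const, of "\<lambda>x. e x - e' x" \<epsilon>] assms by (simp add: L_diff L_const)

lemma V_sum: "finite I \<Longrightarrow> (\<And>i. i \<in> I \<Longrightarrow> f i \<in> V) \<Longrightarrow> (\<lambda>x. \<Sum>i\<in>I. f i x) \<in> V"
  by (induction I rule: finite_induct) (auto intro: V_add simp: V_const[of 0, simplified])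

lemma L_sum: "finite I \<Longrightarrow> (\<And>i. i \<in> I \<Longrightarrow> f i \<in> V) \<Longrightarrow> L (\<lambda>x. \<Sum>i\<in>I. f i x) = (\<Sum>i\<in>I. L (f i))"
proof (induction I rule: finite_induct)
  case empty
  then show ?case using L_const[of 0] by simp
next
  case (insert i I)
  then show ?case by (simp add: L_add V_sum)
qed

lemma norm_square_eq_sum_mono_eval:
  "(norm x)\<^sup>2 = (\<Sum>i\<in>UNIV. mono_eval (\<lambda>j. if j = i then 2 else 0) x)"
proof -
  have "mono_eval (\<lambda>j. if j = i then 2 else 0) x = (\<Prod>j\<in>UNIV. if j = i then (x $ j)\<^sup>2 else 1)" for i
    unfolding mono_eval_def by (rule prod.cong) auto
  then have "mono_eval (\<lambda>j. if j = i then 2 else 0) x = (x $ i)\<^sup>2" for i by simp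
  then show ?thesis unfolding power2_norm_eq_inner inner_vec_def by (simp add: power2_eq_square)
qed

lemma norm_square_in_V: "(\<lambda>x. (norm x)\<^sup>2) \<in> V"
  unfolding norm_square_eq_sum_mono_eval by (intro V_sum mono_eval_in_V) auto

lemma L_tendsto:
  assumes "\<And>k. f k \<in> V" "g \<in> V" "Q \<in> V" "c \<longlonglongrightarrow> 0"
    and "\<And>k x. x \<in> K \<Longrightarrow> \<bar>f k x - g x\<bar> \<le> c k * Q x"
  shows "(\<lambda>k. L (f k)) \<longlonglongrightarrow> L g"
proof -
  have "norm (L (f k) - L g) \<le> c k * L Q" for k
    using L_abs_le[OF V_scale[OF assms(3)], of "\<lambda>x. f k x - g x" "c k"] assms
    by (simp add: L_diff L_scale)
  then have "\<forall>k. norm (L (f k) - L g) \<le> c k * L Q" by blast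
  from Lim_null_comparison[OF always_eventually[OF this] tendsto_mult_left_zero[OF assms(4)]]
  show ?thesis by (simp add: LIM_zero_iff)
qed

lemma L_cube_cutoff_tendsto:
  assumes p: "\<And>x. 0 \<le> p x" "p \<in> V" "(\<lambda>x. p x * (norm x)\<^sup>2) \<in> V"
  shows "(\<lambda>k. L (\<lambda>x. cube_cutoff k (squash_vec x) * p x)) \<longlonglongrightarrow> L p"
proof (rule L_tendsto[OF _ p(2,3)])
  show "(\<lambda>k. 1 / (real k + 1)\<^sup>2) \<longlonglongrightarrow> 0"
  proof -
    have "(\<lambda>k. inverse (real (Suc k)) ^ 2) \<longlonglongrightarrow> 0 ^ 2"
      by (intro tendsto_power LIMSEQ_inverse_real_of_nat)
    then show ?thesis by (simp add: inverse_eq_divide power_divide add.commute)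
  qed
  show "(\<lambda>x. cube_cutoff k (squash_vec x) * p x) \<in> V" for k
  proof (rule V_abs_le[OF p(2)])
    show "\<bar>cube_cutoff k (squash_vec x) * p x\<bar> \<le> p x" for x
      using cube_cutoff_bounds[of k "squash_vec x"] p(1)[of x] by (simp add: abs_mult mult_left_le_one_le)
  qed
  show "\<bar>cube_cutoff k (squash_vec x) * p x - p x\<bar> \<le> 1 / (real k + 1)\<^sup>2 * (p x * (norm x)\<^sup>2)" for k x
  proof -
    have "0 \<le> (1 - cube_cutoff k (squash_vec x)) * p x"
      using cube_cutoff_bounds(2)[of k "squash_vec x"] p(1)[of x] by (intro mult_nonneg_nonneg) auto
    moreover have "cube_cutoff k (squash_vec x) * p x - p x = - ((1 - cube_cutoff k (squash_vec x)) * p x)"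
      by (simp add: algebra_simps)
    ultimately have "\<bar>cube_cutoff k (squash_vec x) * p x - p x\<bar> = (1 - cube_cutoff k (squash_vec x)) * p x"
      by simp
    also have "\<dots> \<le> (norm x)\<^sup>2 / (real k + 1)\<^sup>2 * p x"
      by (rule mult_right_mono[OF one_minus_cube_cutoff_squash p(1)])
    finally show ?thesis by (simp add: mult.commute)
  qed
qed

definition cylinder_premeasure :: "'n cantor set \<Rightarrow> ennreal" where
  "cylinder_premeasure A = ennreal (L (\<lambda>x. indicator A (cantor_code x)))"

lemma indicator_cantor_code_in_V: "(\<lambda>x. indicator A (cantor_code x) :: real) \<in> V"
  by (rule V_bounded[of _ 1]) (simp add: indicator_def)

lemma L_indicator_cantor_code_nonneg: "0 \<le> L (\<lambda>x. indicator A (cantor_code x))"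
  by (rule L_nonneg[OF indicator_cantor_code_in_V]) simp

lemma positive_cylinder_premeasure: "positive cylinders cylinder_premeasure"
  using L_const[of 0] by (simp add: positive_def cylinder_premeasure_def)

lemma additive_cylinder_premeasure: "additive cylinders cylinder_premeasure"
  unfolding additive_def
proof (intro ballI impI)
  fix A B :: "'n cantor set" assume "A \<inter> B = {}"
  then have "(\<lambda>x. indicator (A \<union> B) (cantor_code x) :: real) =
      (\<lambda>x. indicator A (cantor_code x) + indicator B (cantor_code x))"
    by (auto simp: indicator_def fun_eq_iff)
  then show "cylinder_premeasure (A \<union> B) = cylinder_premeasure A + cylinder_premeasure B"
    unfolding cylinder_premeasure_def
    by (simp add: L_add indicator_cantor_code_in_V L_indicator_cantor_code_nonneg)
qed

text \<open>Continuity at \<open>{}\<close> holds for the trivial reason that, by compactness, a decreasing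
  sequence of cylinders with empty intersection is eventually empty.\<close>

lemma cylinder_premeasure_empty_continuous:
  assumes "range A \<subseteq> cylinders" "decseq A" "(\<Inter>i. A i) = {}"
  shows "(\<lambda>i. cylinder_premeasure (A i)) \<longlonglongrightarrow> 0"
proof -
  obtain k where "A k = {}" using Inter_decseq_cylinders_nonempty[OF assms(1,2)] assms(3) by blast
  then have "cylinder_premeasure (A i) = 0" if "k \<le> i" for i
    using decseqD[OF assms(2) that] positive_cylinder_premeasure unfolding positive_def by auto
  then have "eventually (\<lambda>i. cylinder_premeasure (A i) = 0) sequentially"
    by (rule eventually_sequentiallyI)
  then show ?thesis by (rule tendsto_eventually)
qed

lemma exists_cylinder_measure:
  obtains \<rho> :: "'n cantor measure"
  where "sets \<rho> = sigma_sets UNIV cylinders" "space \<rho> = UNIV"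
    "\<And>A. A \<in> cylinders \<Longrightarrow> emeasure \<rho> A = ennreal (L (\<lambda>x. indicator A (cantor_code x)))"
proof -
  obtain \<mu> where \<mu>: "\<forall>A\<in>cylinders. \<mu> A = cylinder_premeasure A"
    and ms: "measure_space UNIV (sigma_sets UNIV cylinders) \<mu>"
    using ring_of_sets.caratheodory_empty_continuous[OF ring_of_sets_cylinders
        positive_cylinder_premeasure additive_cylinder_premeasure]
      cylinder_premeasure_empty_continuous by (auto simp: cylinder_premeasure_def)
  define \<rho> where "\<rho> = measure_of UNIV (sigma_sets UNIV cylinders) \<mu>"
  show thesis
  proof (rule that)
    show "sets \<rho> = sigma_sets UNIV cylinders" unfolding \<rho>_def
      by (subst sets_measure_of) (auto simp: sigma_sets_sigma_sets_eq)
    show "space \<rho> = UNIV" unfolding \<rho>_def by (simp add: space_measure_of_conv)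
    show "emeasure \<rho> A = ennreal (L (\<lambda>x. indicator A (cantor_code x)))" if "A \<in> cylinders" for A
      using emeasure_measure_of_sigma[OF _ _ _ sigma_sets.Basic[OF that]] ms \<mu> that
      by (simp add: \<rho>_def measure_space_def cylinder_premeasure_def)
  qed
qed

end

lemma sum_indicator_vimage_range:
  fixes F :: "'a \<Rightarrow> real"
  assumes "finite (range F)"
  shows "F \<omega> = (\<Sum>v\<in>range F. v * indicator (F -` {v}) \<omega>)"
proof -
  have "(\<Sum>v\<in>range F. v * indicator (F -` {v}) \<omega>) = (\<Sum>v\<in>range F. if v = F \<omega> then v else 0)"
    by (rule sum.cong) (auto simp: indicator_def)
  also have "\<dots> = F \<omega>" using assms by simp
  finally show ?thesis ..
qed

locale cylinder_measure = positive_functional K V L s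
  for K :: "(real^'n::finite) set" and V L s +
  fixes \<rho> :: "'n cantor measure"
  assumes sets_\<rho>: "sets \<rho> = sigma_sets UNIV cylinders"
    and space_\<rho>: "space \<rho> = UNIV"
    and emeasure_\<rho>: "A \<in> cylinders \<Longrightarrow> emeasure \<rho> A = ennreal (L (\<lambda>x. indicator A (cantor_code x)))"
begin

lemma cylinder_in_sets: "A \<in> cylinders \<Longrightarrow> A \<in> sets \<rho>"
  unfolding sets_\<rho> by (rule sigma_sets.Basic)

lemma UNIV_in_cylinders: "UNIV \<in> cylinders"
  by (simp add: cylinders_def depends_upto_def)

lemma measure_\<rho>: "A \<in> cylinders \<Longrightarrow> measure \<rho> A = L (\<lambda>x. indicator A (cantor_code x))"
  by (simp add: measure_def emeasure_\<rho> L_indicator_cantor_code_nonneg)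

lemma measure_\<rho>_UNIV: "measure \<rho> (space \<rho>) = s 0"
  using measure_\<rho>[OF UNIV_in_cylinders] L_const[of 1] by (simp add: space_\<rho>)

lemma finite_measure_\<rho>: "finite_measure \<rho>"
  by (rule finite_measureI) (simp add: space_\<rho> emeasure_\<rho>[OF UNIV_in_cylinders])

interpretation finite_measure \<rho> by (rule finite_measure_\<rho>)

lemma measurable_depends_upto: "depends_upto N F \<Longrightarrow> F \<in> borel_measurable \<rho>"
  by (rule measurableI) (simp_all add: space_\<rho> cylinder_in_sets vimage_in_cylinders)

lemma measurable_bin_point: "bin_point \<in> borel_measurable \<rho>"
  by (rule borel_measurable_LIMSEQ_metric[OF measurable_depends_upto[OF depends_upto_bin_point_upto]])
    (rule bin_point_upto_tendsto)

lemma integral_uniform_approx: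
  assumes "integrable \<rho> F" "integrable \<rho> F'" "\<And>\<omega>. \<bar>F \<omega> - F' \<omega>\<bar> \<le> \<epsilon>"
  shows "\<bar>integral\<^sup>L \<rho> F - integral\<^sup>L \<rho> F'\<bar> \<le> \<epsilon> * s 0"
proof -
  have "\<bar>integral\<^sup>L \<rho> (\<lambda>\<omega>. F \<omega> - F' \<omega>)\<bar> \<le> integral\<^sup>L \<rho> (\<lambda>\<omega>. \<bar>F \<omega> - F' \<omega>\<bar>)"
    using integral_norm_bound[of \<rho> "\<lambda>\<omega>. F \<omega> - F' \<omega>"] by simp
  also have "\<dots> \<le> integral\<^sup>L \<rho> (\<lambda>_. \<epsilon>)"
    using assms by (intro integral_mono) auto
  finally show ?thesis using assms measure_\<rho>_UNIV by (simp add: mult.commute)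
qed

lemma
  assumes "depends_upto N F"
  shows integrable_depends_upto: "integrable \<rho> F"
    and integral_depends_upto: "integral\<^sup>L \<rho> F = L (\<lambda>x. F (cantor_code x))"
proof -
  have fin: "finite (range F)" by (rule finite_range_depends_upto[OF assms])
  have cyl: "F -` {v} \<in> cylinders" for v by (rule vimage_in_cylinders[OF assms])
  have summand: "integrable \<rho> (\<lambda>\<omega>. v * indicator (F -` {v}) \<omega>)" for v
    using cylinder_in_sets[OF cyl]
    by (intro integrable_mult_right integrable_real_indicator) (auto simp: less_top[symmetric])
  show "integrable \<rho> F"
    by (subst sum_indicator_vimage_range[OF fin, abs_def]) (intro Bochner_Integration.integrable_sum summand)
  have "integral\<^sup>L \<rho> F = (\<Sum>v\<in>range F. v * measure \<rho> (F -` {v}))"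
    by (subst sum_indicator_vimage_range[OF fin, abs_def]) (simp add: Bochner_Integration.integral_sum[OF summand] space_\<rho>)
  also have "\<dots> = (\<Sum>v\<in>range F. L (\<lambda>x. v * indicator (F -` {v}) (cantor_code x)))"
    by (simp add: measure_\<rho>[OF cyl] L_scale indicator_cantor_code_in_V)
  also have "\<dots> = L (\<lambda>x. \<Sum>v\<in>range F. v * indicator (F -` {v}) (cantor_code x))"
    by (rule L_sum[OF fin, symmetric]) (intro V_scale indicator_cantor_code_in_V)
  also have "\<dots> = L (\<lambda>x. F (cantor_code x))"
    by (simp flip: sum_indicator_vimage_range[OF fin])
  finally show "integral\<^sup>L \<rho> F = L (\<lambda>x. F (cantor_code x))" .
qed

text \<open>Integration against \<open>\<rho>\<close> agrees with \<open>L\<close> on cylinder functions, hence, both being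
  continuous for uniform convergence, on their uniform limits.\<close>

lemma
  assumes F: "F \<in> borel_measurable \<rho>" and bounded: "\<And>\<omega>. \<bar>F \<omega>\<bar> \<le> B"
    and approx: "\<And>\<epsilon>. 0 < \<epsilon> \<Longrightarrow> \<exists>N F'. depends_upto N F' \<and> (\<forall>\<omega>. \<bar>F \<omega> - F' \<omega>\<bar> \<le> \<epsilon>)"
  shows integrable_uniform_limit: "integrable \<rho> F"
    and integral_uniform_limit: "integral\<^sup>L \<rho> F = L (\<lambda>x. F (cantor_code x))"
proof -
  show F_int: "integrable \<rho> F"
    by (rule integrable_const_bound[where B = B]) (use bounded F in auto)
  have F_V: "(\<lambda>x. F (cantor_code x)) \<in> V" by (rule V_bounded[where B = B]) (simp add: bounded)
  have close: "\<bar>integral\<^sup>L \<rho> F - L (\<lambda>x. F (cantor_code x))\<bar> \<le> 2 * \<epsilon> * s 0" if eps: "0 < \<epsilon>" for \<epsilon>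
  proof -
    obtain N F' where F': "depends_upto N F'" "\<And>\<omega>. \<bar>F \<omega> - F' \<omega>\<bar> \<le> \<epsilon>"
      using approx[OF eps] by blast
    have "\<bar>F' \<omega>\<bar> \<le> B + \<epsilon>" for \<omega>
      using bounded[of \<omega>] F'(2)[of \<omega>] by (auto simp: abs_le_iff)
    then have F'_V: "(\<lambda>x. F' (cantor_code x)) \<in> V" by (intro V_bounded)
    have "\<bar>integral\<^sup>L \<rho> F - integral\<^sup>L \<rho> F'\<bar> \<le> \<epsilon> * s 0"
      by (rule integral_uniform_approx[OF F_int integrable_depends_upto[OF F'(1)] F'(2)])
    moreover have "\<bar>L (\<lambda>x. F (cantor_code x)) - L (\<lambda>x. F' (cantor_code x))\<bar> \<le> \<epsilon> * s 0"
      by (rule L_uniform_approx[OF F_V F'_V F'(2)])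
    ultimately show ?thesis using integral_depends_upto[OF F'(1)] by (auto simp: abs_le_iff)
  qed
  have "\<bar>integral\<^sup>L \<rho> F - L (\<lambda>x. F (cantor_code x))\<bar> \<le> 0 + e" if "0 < e" for e
  proof -
    have "\<bar>integral\<^sup>L \<rho> F - L (\<lambda>x. F (cantor_code x))\<bar> \<le> 2 * (e / (2 * s 0 + 1)) * s 0"
      using that s_zero_nonneg by (intro close) simp
    also have "\<dots> \<le> e" using that s_zero_nonneg by (simp add: field_simps)
    finally show ?thesis by simp
  qed
  then have "\<bar>integral\<^sup>L \<rho> F - L (\<lambda>x. F (cantor_code x))\<bar> \<le> 0" by (rule field_le_epsilon)
  then show "integral\<^sup>L \<rho> F = L (\<lambda>x. F (cantor_code x))" by simp
qed

lemma
  assumes G: "continuous_on UNIV G"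
  shows integrable_bin_point: "integrable \<rho> (\<lambda>\<omega>. G (bin_point \<omega>))"
    and integral_bin_point: "integral\<^sup>L \<rho> (\<lambda>\<omega>. G (bin_point \<omega>)) = L (\<lambda>x. G (squash_vec x))"
proof -
  have "compact (G ` cbox 0 1)" by (rule compact_continuous_image[OF continuous_on_subset[OF G]]) auto
  then obtain B where "\<forall>z\<in>G ` cbox 0 1. norm z \<le> B" using compact_imp_bounded bounded_iff by metis
  then have B: "\<bar>G (bin_point \<omega>)\<bar> \<le> B" for \<omega> using bin_point_in_cube by fastforce
  have measurable: "(\<lambda>\<omega>. G (bin_point \<omega>)) \<in> borel_measurable \<rho>"
    by (rule measurable_compose[OF measurable_bin_point borel_measurable_continuous_onI[OF G]])
  have approx: "\<exists>N F'. depends_upto N F' \<and> (\<forall>\<omega>. \<bar>G (bin_point \<omega>) - F' \<omega>\<bar> \<le> \<epsilon>)" if "0 < \<epsilon>" for \<epsilon>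
  proof -
    obtain N where "\<And>\<omega>. \<bar>G (bin_point \<omega>) - G (bin_point_upto N \<omega>)\<bar> \<le> \<epsilon>"
      using bin_point_upto_uniform_approx[OF G \<open>0 < \<epsilon>\<close>] by blast
    moreover have "depends_upto N (\<lambda>\<omega>. G (bin_point_upto N \<omega>))"
      using depends_upto_bin_point_upto[of N] unfolding depends_upto_def by metis
    ultimately show ?thesis by blast
  qed
  show "integrable \<rho> (\<lambda>\<omega>. G (bin_point \<omega>))"
    by (rule integrable_uniform_limit[OF measurable B approx])
  have "integral\<^sup>L \<rho> (\<lambda>\<omega>. G (bin_point \<omega>)) = L (\<lambda>x. G (bin_point (cantor_code x)))"
    by (rule integral_uniform_limit[OF measurable B approx])
  then show "integral\<^sup>L \<rho> (\<lambda>\<omega>. G (bin_point \<omega>)) = L (\<lambda>x. G (squash_vec x))"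
    by (simp add: bin_point_cantor_code)
qed

lemma measurable_decode: "decode \<in> borel_measurable \<rho>"
  unfolding decode_def[abs_def] by (rule measurable_compose[OF measurable_bin_point measurable_unsquash_vec])

lemma box_codes_in_sets: "box_codes \<in> sets \<rho>"
proof -
  have "bin_point -` box 0 1 \<inter> space \<rho> \<in> sets \<rho>" by (rule measurable_sets[OF measurable_bin_point]) simp
  then show ?thesis by (simp add: box_codes_def vimage_def space_\<rho>)
qed

text \<open>The cutoffs turn \<open>p\<close> into the continuous functions of the cube to which
  integral_bin_point applies; monotone convergence removes them.\<close>

lemma
  assumes p: "continuous_on UNIV p" "\<And>x. 0 \<le> p x" "p \<in> V" "(\<lambda>x. p x * (norm x)\<^sup>2) \<in> V"
  shows integrable_decode_box: "integrable \<rho> (\<lambda>\<omega>. indicator box_codes \<omega> * p (decode \<omega>))"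
    and integral_decode_box: "integral\<^sup>L \<rho> (\<lambda>\<omega>. indicator box_codes \<omega> * p (decode \<omega>)) = L p"
proof -
  define f where "f k \<omega> = cutoff_lift k p (bin_point \<omega>)" for k \<omega>
  have f_eq: "f k \<omega> = cube_cutoff k (bin_point \<omega>) * p (decode \<omega>)" for k \<omega>
    by (simp add: f_def cutoff_lift_eq decode_def)
  have f_int: "integrable \<rho> (f k)" for k
    unfolding f_def by (rule integrable_bin_point[OF continuous_on_cutoff_lift[OF p(1)]])
  have f_integral: "integral\<^sup>L \<rho> (f k) = L (\<lambda>x. cube_cutoff k (squash_vec x) * p x)" for k
    unfolding f_def integral_bin_point[OF continuous_on_cutoff_lift[OF p(1)]]
    by (simp add: cutoff_lift_eq unsquash_squash_vec)
  have f_mono: "mono (\<lambda>k. f k \<omega>)" for \<omega>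
    unfolding mono_def f_eq
    by (auto intro!: mult_right_mono cube_cutoff_mono bin_point_in_cube p(2))
  have f_lim: "(\<lambda>k. f k \<omega>) \<longlonglongrightarrow> indicator box_codes \<omega> * p (decode \<omega>)" for \<omega>
  proof (cases "\<omega> \<in> box_codes")
    case True
    then have "eventually (\<lambda>k. f k \<omega> = indicator box_codes \<omega> * p (decode \<omega>)) sequentially"
      using cube_cutoff_eventually_1[of "bin_point \<omega>"] unfolding box_codes_def f_eq
      by (auto elim: eventually_mono)
    then show ?thesis by (rule tendsto_eventually)
  next
    case False
    then show ?thesis by (simp add: f_eq box_codes_def cube_cutoff_outside_box)
  qed
  have L_lim: "(\<lambda>k. integral\<^sup>L \<rho> (f k)) \<longlonglongrightarrow> L p"
    unfolding f_integral by (rule L_cube_cutoff_tendsto[OF p(2-4)])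
  have measurable: "(\<lambda>\<omega>. indicator box_codes \<omega> * p (decode \<omega>)) \<in> borel_measurable \<rho>"
    using box_codes_in_sets
    by (intro borel_measurable_times borel_measurable_indicator
        measurable_compose[OF measurable_decode borel_measurable_continuous_onI[OF p(1)]])
  show "integrable \<rho> (\<lambda>\<omega>. indicator box_codes \<omega> * p (decode \<omega>))"
    by (rule integrable_monotone_convergence[OF f_int AE_I2[OF f_mono] AE_I2[OF f_lim] L_lim measurable])
  show "integral\<^sup>L \<rho> (\<lambda>\<omega>. indicator box_codes \<omega> * p (decode \<omega>)) = L p"
    by (rule integral_monotone_convergence[OF f_int AE_I2[OF f_mono] AE_I2[OF f_lim] L_lim measurable])
qed

lemma AE_box_codes: "AE \<omega> in \<rho>. \<omega> \<in> box_codes"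
proof -
  have "integral\<^sup>L \<rho> (\<lambda>\<omega>. indicator box_codes \<omega> * 1) = L (\<lambda>_. 1)"
    by (rule integral_decode_box) (simp_all add: V_const norm_square_in_V)
  then have "measure \<rho> box_codes = measure \<rho> (space \<rho>)"
    using L_const[of 1] measure_\<rho>_UNIV box_codes_in_sets by simp
  then have "measure \<rho> (space \<rho> - box_codes) = 0"
    using finite_measure_compl[OF box_codes_in_sets] by simp
  then have "space \<rho> - box_codes \<in> null_sets \<rho>"
    using box_codes_in_sets by (simp add: emeasure_eq_measure null_sets_def)
  then show ?thesis by (rule AE_I') auto
qed

lemma
  assumes "continuous_on UNIV p" "\<And>x. 0 \<le> p x" "p \<in> V" "(\<lambda>x. p x * (norm x)\<^sup>2) \<in> V"
  shows integrable_decode: "integrable \<rho> (\<lambda>\<omega>. p (decode \<omega>))"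
    and integral_decode: "integral\<^sup>L \<rho> (\<lambda>\<omega>. p (decode \<omega>)) = L p"
proof -
  have AE: "AE \<omega> in \<rho>. indicator box_codes \<omega> * p (decode \<omega>) = p (decode \<omega>)"
    using AE_box_codes by eventually_elim simp
  have "(\<lambda>\<omega>. p (decode \<omega>)) \<in> borel_measurable \<rho>"
    by (rule measurable_compose[OF measurable_decode borel_measurable_continuous_onI[OF assms(1)]])
  note cong = integrable_cong_AE[OF borel_measurable_integrable[OF integrable_decode_box[OF assms]] this AE]
    integral_cong_AE[OF borel_measurable_integrable[OF integrable_decode_box[OF assms]] this AE]
  show "integrable \<rho> (\<lambda>\<omega>. p (decode \<omega>))" using cong(1) integrable_decode_box[OF assms] by simp
  show "integral\<^sup>L \<rho> (\<lambda>\<omega>. p (decode \<omega>)) = L p" using cong(2) integral_decode_box[OF assms] by simp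
qed

lemma AE_decode_in_K: "AE \<omega> in \<rho>. decode \<omega> \<in> K"
proof -
  define g where "g x = min 1 (infdist x K)" for x
  have g_cont: "continuous_on UNIV g" unfolding g_def by (intro continuous_intros continuous_on_infdist)
  have g_bounds: "0 \<le> g x" "g x \<le> 1" for x by (simp_all add: g_def infdist_nonneg)
  have g_V: "g \<in> V" by (rule V_bounded[of _ 1]) (simp add: g_bounds)
  have "(\<lambda>x. g x * (norm x)\<^sup>2) \<in> V"
    by (rule V_abs_le[OF norm_square_in_V]) (simp add: g_bounds abs_mult mult_left_le_one_le)
  note g_integral = integrable_decode[OF g_cont g_bounds(1) g_V this] integral_decode[OF g_cont g_bounds(1) g_V this]
  have "L g \<le> L (\<lambda>_. 0)" by (rule L_mono[OF g_V V_const]) (simp add: g_def infdist_zero)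
  then have "L g = 0" using L_nonneg[OF g_V g_bounds(1)] L_const[of 0] by simp
  then have "AE \<omega> in \<rho>. g (decode \<omega>) = 0"
    using integral_nonneg_eq_0_iff_AE[OF g_integral(1)] g_integral(2) g_bounds(1) by simp
  then show ?thesis
  proof eventually_elim
    fix \<omega> assume "g (decode \<omega>) = 0"
    then have "infdist (decode \<omega>) K = 0" by (simp add: g_def min_def split: if_splits)
    then show "decode \<omega> \<in> K" using in_closed_iff_infdist_zero[OF closed_K K_nonempty] by simp
  qed
qed

lemma mono_eval_norm_square_in_V: "(\<lambda>x. mono_eval \<beta> x * (norm x)\<^sup>2) \<in> V"
  unfolding norm_square_eq_sum_mono_eval sum_distrib_left mono_eval_add[symmetric]
  by (intro V_sum mono_eval_in_V) auto

lemma dominated_in_V: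
  assumes "P \<in> V" "(\<lambda>x. P x * (norm x)\<^sup>2) \<in> V" "\<And>x. 0 \<le> q x" "\<And>x. q x \<le> P x"
  shows "q \<in> V" "(\<lambda>x. q x * (norm x)\<^sup>2) \<in> V"
proof -
  show "q \<in> V" by (rule V_abs_le[OF assms(1)]) (simp add: assms(3,4))
  show "(\<lambda>x. q x * (norm x)\<^sup>2) \<in> V"
    by (rule V_abs_le[OF assms(2)]) (simp add: abs_mult assms(3,4) mult_right_mono)
qed

text \<open>A monomial is split into its positive and negative parts, each dominated by
  \<open>1 + x\<^sup>2\<^sup>\<alpha>\<close>.\<close>

lemma
  shows integrable_mono_eval_decode: "integrable \<rho> (\<lambda>\<omega>. mono_eval \<alpha> (decode \<omega>))"
    and integral_mono_eval_decode: "integral\<^sup>L \<rho> (\<lambda>\<omega>. mono_eval \<alpha> (decode \<omega>)) = s \<alpha>"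
proof -
  define m where "m = mono_eval \<alpha>"
  define P where "P x = 1 + mono_eval (\<alpha> + \<alpha>) x" for x
  have m_cont: "continuous_on UNIV m" unfolding m_def mono_eval_def by (intro continuous_intros)
  have m_le: "\<bar>m x\<bar> \<le> P x" for x unfolding m_def P_def by (rule mono_eval_abs_le)
  have P_V: "P \<in> V" unfolding P_def by (intro V_add V_const mono_eval_in_V)
  have P_norm_V: "(\<lambda>x. P x * (norm x)\<^sup>2) \<in> V"
    unfolding P_def distrib_right
    by (intro V_add) (simp_all add: norm_square_in_V mono_eval_norm_square_in_V)
  have pos_bounds: "0 \<le> max 0 (m x)" "max 0 (m x) \<le> P x" for x using m_le[of x] by auto
  have neg_bounds: "0 \<le> max 0 (- m x)" "max 0 (- m x) \<le> P x" for x using m_le[of x] by auto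
  have "continuous_on UNIV (\<lambda>x. max 0 (m x))" "continuous_on UNIV (\<lambda>x. max 0 (- m x))"
    by (intro continuous_intros m_cont)+
  note pos = this(1) pos_bounds(1) dominated_in_V[OF P_V P_norm_V pos_bounds]
    and neg = this(2) neg_bounds(1) dominated_in_V[OF P_V P_norm_V neg_bounds]
  have m_eq: "m x = max 0 (m x) - max 0 (- m x)" for x by simp
  have "integrable \<rho> (\<lambda>\<omega>. m (decode \<omega>))"
    using Bochner_Integration.integrable_diff[OF integrable_decode[OF pos] integrable_decode[OF neg]]
    by (simp only: m_eq[symmetric])
  then show "integrable \<rho> (\<lambda>\<omega>. mono_eval \<alpha> (decode \<omega>))" by (simp add: m_def)
  have "integral\<^sup>L \<rho> (\<lambda>\<omega>. m (decode \<omega>)) = L (\<lambda>x. max 0 (m x)) - L (\<lambda>x. max 0 (- m x))"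
    by (subst m_eq) (simp add: integrable_decode[OF pos] integrable_decode[OF neg]
        integral_decode[OF pos] integral_decode[OF neg])
  also have "\<dots> = L m" by (subst (3) m_eq[abs_def]) (simp add: L_diff pos(3) neg(3))
  finally show "integral\<^sup>L \<rho> (\<lambda>\<omega>. mono_eval \<alpha> (decode \<omega>)) = s \<alpha>" by (simp add: m_def L_mono_eval)
qed

theorem moment_seq_distr_decode: "moment_seq K s"
  unfolding moment_seq_def
proof (intro exI[of _ "distr \<rho> borel decode"] conjI allI)
  show "sets (distr \<rho> borel decode) = sets borel" by simp
  have "K \<in> sets borel" using closed_K by simp
  then have N: "decode -` (UNIV - K) \<inter> space \<rho> \<in> sets \<rho>" by (intro measurable_sets[OF measurable_decode]) auto
  have "{\<omega> \<in> space \<rho>. decode \<omega> \<notin> K} = decode -` (UNIV - K) \<inter> space \<rho>" by auto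
  from AE_iff_measurable[OF N this] AE_decode_in_K
  have "emeasure \<rho> (decode -` (UNIV - K) \<inter> space \<rho>) = 0" by simp
  then show "emeasure (distr \<rho> borel decode) (space (distr \<rho> borel decode) - K) = 0"
    using \<open>K \<in> sets borel\<close> by (simp add: emeasure_distr[OF measurable_decode])
  fix \<alpha> :: "'n \<Rightarrow> nat"
  have mono_eval_measurable: "mono_eval \<alpha> \<in> borel_measurable borel"
    by (rule borel_measurable_continuous_onI) (unfold mono_eval_def, intro continuous_intros)
  show "integrable (distr \<rho> borel decode) (mono_eval \<alpha>)"
    using integrable_mono_eval_decode[of \<alpha>]
    by (simp add: integrable_distr_eq[OF measurable_decode mono_eval_measurable])
  show "s \<alpha> = integral\<^sup>L (distr \<rho> borel decode) (mono_eval \<alpha>)"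
    using integral_mono_eval_decode[of \<alpha>] by (simp add: integral_distr[OF measurable_decode mono_eval_measurable])
qed

end

context positive_functional
begin

theorem haviland: "moment_seq K s"
proof -
  obtain \<rho> where "sets \<rho> = sigma_sets UNIV cylinders" "space \<rho> = UNIV"
    "\<And>A. A \<in> cylinders \<Longrightarrow> emeasure \<rho> A = ennreal (L (\<lambda>x. indicator A (cantor_code x)))"
    using exists_cylinder_measure by blast
  then interpret cylinder_measure K V L s \<rho>
    by (intro cylinder_measure.intro positive_functional_axioms cylinder_measure_axioms.intro)
  show ?thesis by (rule moment_seq_distr_decode)
qed

end

section \<open>Positivity preservers and moment sequences\<close>

lemma K_pos_preserver_imp_moment_seq:
  fixes K :: "(real^'n::finite) set"
  assumes "closed K" "0 \<in> K" "K_pos_preserver K (Dop s)"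
  shows "moment_seq K s"
proof -
  have G: "positive_linear_graph K (moment_graph s)"
    using assms(2,3) by (rule positive_linear_moment_graph)
  obtain L where L_graph: "\<And>f a. (f, a) \<in> moment_graph s \<Longrightarrow> L f = a"
    and L_add: "\<And>e e'. e \<in> sandwich_space K (moment_graph s) \<Longrightarrow> e' \<in> sandwich_space K (moment_graph s) \<Longrightarrow>
           L (\<lambda>x. e x + e' x) = L e + L e'"
    and L_scale: "\<And>e c. e \<in> sandwich_space K (moment_graph s) \<Longrightarrow> L (\<lambda>x. c * e x) = c * L e"
    and L_nonneg: "\<And>e. e \<in> sandwich_space K (moment_graph s) \<Longrightarrow> (\<And>x. x \<in> K \<Longrightarrow> 0 \<le> e x) \<Longrightarrow> 0 \<le> L e"
    using riesz_extension[OF G] by blast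
  interpret positive_functional K "sandwich_space K (moment_graph s)" L s
  proof
    show "closed K" "K \<noteq> {}" using assms(1,2) by auto
    show "mono_eval \<alpha> \<in> sandwich_space K (moment_graph s)" for \<alpha>
      by (rule graph_in_sandwich_space[OF mono_eval_in_moment_graph])
    show "L (mono_eval \<alpha>) = s \<alpha>" for \<alpha> by (rule L_graph[OF mono_eval_in_moment_graph])
  qed (fact sandwich_space_add[OF G] sandwich_space_scale[OF G] sandwich_space_abs_le[OF G]
      L_add L_scale L_nonneg)+
  show ?thesis by (rule haviland)
qed

theorem proposition4p16:
  fixes K :: "(real^'n::finite) set" and s :: "('n \<Rightarrow> nat) \<Rightarrow> real"
  assumes "closed K" and "convex K" and "cone K" and "K \<noteq> {}"
  shows "K_pos_preserver K (Dop s) \<longleftrightarrow> moment_seq (sharp K) s"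
proof -
  have sharp: "sharp K = K" by (rule sharp_convex_cone[OF assms(2-4)])
  have "0 \<in> K" using assms(3,4) cone_contains_0 by blast
  show ?thesis
    unfolding sharp
    using K_pos_preserver_imp_moment_seq[OF assms(1) \<open>0 \<in> K\<close>]
      moment_seq_imp_K_pos_preserver[of K s] assms(1) sharp
    by auto
qed

end
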